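(* Let $G\in\mathcal W^{0,+}_T$ with $G<+\infty$ $\mathcal Q^T$-q.s. 1. Let $U$ be a random utility function such that $\sup_{P\in\mathcal Q^T}E_PU^-(\cdot,y)<\infty$ for all $y>0$, and $E_PU^+(\cdot,1)<\infty$ and $E_P|U(\cdot,G(\cdot))|<\infty$ for all $P\in\mathcal Q^T$. (a) For every $P\in\mathcal Q^T$ there is a unique constant $e(G,P)\in[0,\infty)$ with $E_PU(\cdot,e(G,P))=E_PU(\cdot,G(\cdot))$. (b) If moreover $G\in\mathcal W^{\infty,+}_T$, $\sup_{P\in\mathcal Q^T}E_PU^-(\cdot,G(\cdot))<\infty$ and $\inf_{P\in\mathcal Q^T}E_PU'(\cdot,z)>0$ for all $z>0$, then there is a unique $e(G)\in[0,\|G\|_\infty]$ with $\inf_{P\in\mathcal Q^T}E_PU(\cdot,e(G))=\inf_{P\in\mathcal Q^T}E_PU(\cdot,G(\cdot))$, and $e(G)\ge\inf_{P\in\mathcal Q^T}e(G,P)$. 2. Let $U$ be a non-random utility function with $\{x\in\mathbb R:U(x)>-\infty\}=(0,\infty)$, such that $E_PU^+(G(\cdot))<\infty$ for all $P\in\mathcal Q^T$ and $\sup_{P\in\mathcal Q^T}E_PU^-(G(\cdot))<\infty$. Then there exist unique $e(G,P)\in[0,\infty)$ (for each $P\in\mathcal Q^T$) and $e(G)\in[0,\infty)$ with $U(e(G,P))=E_PU(G(\cdot))$ for all $P\in\mathcal Q^T$ and $U(e(G))=\inf_{P\in\mathcal Q^T}E_PU(G(\cdot))$. Moreover $e(G,P)\le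 E_PG$ for all $P\in\mathcal Q^T$ and $e(G)=\inf_{P\in\mathcal Q^T}e(G,P)\le\inf_{P\in\mathcal Q^T}E_PG$. Furthermore, with $\rho(G,P):=E_PG-e(G,P)$ and $\rho(G):=\sup_{P\in\mathcal Q^T}\rho(G,P)$, one has $0\le\rho(G)\le\sup_{P\in\mathcal Q^T}E_PG-e(G)$.
   Context: Framework: $T\ge1$; Polish spaces $\Omega_1,\dots,\Omega_T$; $\Omega^t:=\Omega_1\times\cdots\times\Omega_t$. $\mathfrak P(X)$: Borel probability measures on Polish $X$; $\mathcal B_c(X)$: universal $\sigma$-algebra (intersection of all completions of the Borel $\sigma$-algebra), each $P$ extended to it. $\mathcal SK_t$: universally measurable stochastic kernels on $\Omega_t$ given $\Omega^{t-1}$; $P\otimes p(A):=\int\int1_A(\omega^{t-1},\omega_t)p(d\omega_t,\omega^{t-1})P(d\omega^{t-1})$. Given random sets $\mathcal Q_{t+1}:\Omega^t\twoheadrightarrow\mathfrak P(\Omega_{t+1})$, $\mathcal Q^T:=\{Q_1\otimes q_2\otimes\cdots\otimes q_T:Q_1\in\mathcal Q_1,\ q_{s+1}\in\mathcal SK_{s+1},\ q_{s+1}(\cdot,\omega^s)\in\mathcal Q_{s+1}(\omega^s)\ Q_s\text{-a.s.}\}$, $Q_s:=Q_1\otimes\cdots\otimes q_s$. "$\mathcal Q^T$-q.s." means outside a set contained, for every $P\in\mathcal Q^T$, in a $P$-null universally measurable set. $\mathcal W^{0,+}_T$: universally measurable $X:\Omega^T\to[0,\infty]$; $\mathcal W^{\infty,+}_T$: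 those bounded $\mathcal Q^T$-q.s. by a constant; $\|G\|_\infty:=\inf\{M\ge0:|G|\le M\ \mathcal Q^T\text{-q.s.}\}$. A random utility function is $U:\Omega^T\times(0,\infty)\to\mathbb R$ with $U(\cdot,x)$ universally measurable for each $x>0$ and $U(\omega^T,\cdot)$ concave, strictly increasing and twice continuously differentiable on $(0,\infty)$ for each $\omega^T$, extended to $0$ by right-continuity and by $U(\cdot,x)=-\infty$ for $x<0$; $U'$ is the derivative in $x$. A non-random utility function is one not depending on $\omega^T$. $U^\pm$ denote positive and negative parts. *)

theory Defs
  imports "HOL-Probability.Probability"
begin

definition Polish_space :: "'a topology \<Rightarrow> bool" where
  "Polish_space Y \<longleftrightarrow> completely_metrizable_space Y \<and> separable_space Y"

definition borel_of :: "'a topology \<Rightarrow> 'a measure" where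
  "borel_of Y = sigma (topspace Y) {U. openin Y U}"

definition probs :: "'a topology \<Rightarrow> 'a measure set" where
  "probs Y = {P. prob_space P \<and> sets P = sets (borel_of Y) \<and> space P = topspace Y}"

definition univ_sets :: "'a topology \<Rightarrow> 'a set set" where
  "univ_sets Y = {A. A \<subseteq> topspace Y \<and> (\<forall>P\<in>probs Y. A \<in> sets (completion P))}"

definition univ_space :: "'a topology \<Rightarrow> 'a measure" where
  "univ_space Y = measure_of (topspace Y) (univ_sets Y) (\<lambda>_. 0)"

text \<open>Omega^t = Omega_1 x ... x Omega_t, realised as functions on {1..t}
  (extensional, i.e. undefined outside {1..t}) with the product topology.\<close>
definition Om :: "(nat \<Rightarrow> 'a topology) \<Rightarrow> nat \<Rightarrow> (nat \<Rightarrow> 'a) topology" where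
  "Om X t = product_topology X {1..t}"

definition SK :: "(nat \<Rightarrow> 'a topology) \<Rightarrow> nat \<Rightarrow> ((nat \<Rightarrow> 'a) \<Rightarrow> 'a measure) \<Rightarrow> bool" where
  "SK X t p \<longleftrightarrow>
     (\<forall>\<omega>\<in>topspace (Om X (t - 1)). p \<omega> \<in> probs (X t)) \<and>
     (\<forall>A\<in>sets (borel_of (X t)).
        (\<lambda>\<omega>. measure (p \<omega>) A) \<in> borel_measurable (univ_space (Om X (t - 1))))"

definition kcomp :: "(nat \<Rightarrow> 'a topology) \<Rightarrow> nat \<Rightarrow> (nat \<Rightarrow> 'a) measure
     \<Rightarrow> ((nat \<Rightarrow> 'a) \<Rightarrow> 'a measure) \<Rightarrow> (nat \<Rightarrow> 'a) measure" where
  "kcomp X t P p = measure_of (topspace (Om X t)) (sets (borel_of (Om X t)))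
     (\<lambda>A. \<integral>\<^sup>+ \<omega>. emeasure (p \<omega>) {x \<in> topspace (X t). fun_upd \<omega> t x \<in> A} \<partial>completion P)"

text \<open>Q_s = Q_1 (x) q_2 (x) ... (x) q_s; Q_1 is encoded as a kernel q 1 from the one-point
  space Omega^0, and Q_0 is the Dirac measure on Omega^0.\<close>
fun Qseq :: "(nat \<Rightarrow> 'a topology) \<Rightarrow> (nat \<Rightarrow> (nat \<Rightarrow> 'a) \<Rightarrow> 'a measure) \<Rightarrow> nat \<Rightarrow> (nat \<Rightarrow> 'a) measure" where
  "Qseq X q 0 = return (borel_of (Om X 0)) (\<lambda>_. undefined)"
| "Qseq X q (Suc s) = kcomp X (Suc s) (Qseq X q s) (q (Suc s))"

text \<open>Q^T built from random sets Qr (s+1) : Omega^s ->> P(Omega_(s+1)), s = 0..T-1.\<close>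
definition QT :: "(nat \<Rightarrow> 'a topology) \<Rightarrow> (nat \<Rightarrow> (nat \<Rightarrow> 'a) \<Rightarrow> 'a measure set) \<Rightarrow> nat
     \<Rightarrow> (nat \<Rightarrow> 'a) measure set" where
  "QT X Qr T = {Qseq X q T | q. \<forall>s<T. SK X (Suc s) (q (Suc s)) \<and>
       (AE \<omega> in completion (Qseq X q s). q (Suc s) \<omega> \<in> Qr (Suc s) \<omega>)}"

definition qs :: "(nat \<Rightarrow> 'a) topology \<Rightarrow> (nat \<Rightarrow> 'a) measure set \<Rightarrow> ((nat \<Rightarrow> 'a) \<Rightarrow> bool) \<Rightarrow> bool" where
  "qs Y Qs Prop \<longleftrightarrow> (\<forall>P\<in>Qs. \<exists>N\<in>univ_sets Y. emeasure (completion P) N = 0 \<and>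
       {\<omega>\<in>topspace Y. \<not> Prop \<omega>} \<subseteq> N)"

definition qs_norm :: "(nat \<Rightarrow> 'a) topology \<Rightarrow> (nat \<Rightarrow> 'a) measure set \<Rightarrow> ((nat \<Rightarrow> 'a) \<Rightarrow> ennreal) \<Rightarrow> ennreal" where
  "qs_norm Y Qs G = Inf {M. qs Y Qs (\<lambda>\<omega>. G \<omega> \<le> M)}"

definition Epos :: "'b measure \<Rightarrow> ('b \<Rightarrow> ennreal) \<Rightarrow> ennreal" where
  "Epos P f = (\<integral>\<^sup>+ \<omega>. f \<omega> \<partial>completion P)"

text \<open>E_P f = E_P f^+ - E_P f^- (convention infinity - infinity = -infinity; never used below).\<close>
definition Eexp :: "'b measure \<Rightarrow> ('b \<Rightarrow> ereal) \<Rightarrow> ereal" where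
  "Eexp P f = (let a = Epos P (\<lambda>\<omega>. e2ennreal (f \<omega>)); b = Epos P (\<lambda>\<omega>. e2ennreal (- f \<omega>))
             in if a = \<infinity> \<and> b = \<infinity> then -\<infinity> else enn2ereal a - enn2ereal b)"

definition C2_pos :: "(real \<Rightarrow> real) \<Rightarrow> bool" where
  "C2_pos f \<longleftrightarrow> (\<exists>f' f''. (\<forall>x>0. (f has_real_derivative f' x) (at x) \<and>
                                   (f' has_real_derivative f'' x) (at x)) \<and>
                           continuous_on {0<..} f'')"

definition utility :: "(real \<Rightarrow> real) \<Rightarrow> bool" where
  "utility u \<longleftrightarrow> concave_on {0<..} u \<and> strict_mono_on {0<..} u \<and> C2_pos u"

definition Uext :: "(real \<Rightarrow> real) \<Rightarrow> real \<Rightarrow> ereal" where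
  "Uext u x = (if 0 < x then ereal (u x)
               else if x = 0 then Lim (at_right 0) (\<lambda>y. ereal (u y)) else -\<infinity>)"

definition random_utility :: "(nat \<Rightarrow> 'a topology) \<Rightarrow> nat \<Rightarrow> ((nat \<Rightarrow> 'a) \<Rightarrow> real \<Rightarrow> real) \<Rightarrow> bool" where
  "random_utility X T U \<longleftrightarrow>
     (\<forall>x>0. (\<lambda>\<omega>. U \<omega> x) \<in> borel_measurable (univ_space (Om X T))) \<and>
     (\<forall>\<omega>\<in>topspace (Om X T). utility (U \<omega>))"

end

theory Submission
  imports Defs
begin

(* For a fixed prior P, c \<mapsto> E_P U(c) is continuous and strictly increasing on [0,\<infinity>),
   starts below E_P U(G) and eventually exceeds it (as G < \<infinity> almost surely), so the intermediate
   value theorem gives a unique certainty equivalent.  For the robust version, the lower envelope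
   \<phi>(c) = inf_P E_P U(c) is an infimum of concave functions, hence concave and continuous on
   (0,\<infinity>); a uniformly positive expected marginal utility makes it strictly increasing, and
   \<phi>(0) \<le> inf_P E_P U(G) \<le> \<phi>(\<parallel>G\<parallel>\<^sub>\<infinity>) places the solution in [0,\<parallel>G\<parallel>\<^sub>\<infinity>].  For a non-random utility,
   E_P U(c) = U(c), and Jensen's inequality gives e(G,P) \<le> E_P G.

   All priors in Q^T are genuine probability measures: a kernel composition is countably additive
   because, on a product of second countable spaces, the Borel sets are generated by measurable
   rectangles, for which the section measures are measurable by the kernel property. *)

definition ereal_expectation :: "'b measure \<Rightarrow> ('b \<Rightarrow> ereal) \<Rightarrow> ereal" where
  "ereal_expectation M f = (let a = (\<integral>\<^sup>+\<omega>. e2ennreal (f \<omega>) \<partial>M); b = (\<integral>\<^sup>+\<omega>. e2ennreal (- f \<omega>) \<partial>M)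
     in if a = \<infinity> \<and> b = \<infinity> then -\<infinity> else enn2ereal a - enn2ereal b)"

lemma Eexp_eq_ereal_expectation: "Eexp P f = ereal_expectation (completion P) f"
  by (simp add: Eexp_def ereal_expectation_def Epos_def)

lemma enn2ereal_eq_ereal_enn2real: "a < \<infinity> \<Longrightarrow> enn2ereal a = ereal (enn2real a)"
  by (cases a rule: ennreal_cases) (auto simp: enn2ereal_ennreal)

lemma ereal_expectation_mono_AE:
  assumes "AE \<omega> in M. f \<omega> \<le> g \<omega>"
  shows "ereal_expectation M f \<le> ereal_expectation M g"
proof -
  define a1 where "a1 = (\<integral>\<^sup>+\<omega>. e2ennreal (f \<omega>) \<partial>M)"
  define b1 where "b1 = (\<integral>\<^sup>+\<omega>. e2ennreal (- f \<omega>) \<partial>M)"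
  define a2 where "a2 = (\<integral>\<^sup>+\<omega>. e2ennreal (g \<omega>) \<partial>M)"
  define b2 where "b2 = (\<integral>\<^sup>+\<omega>. e2ennreal (- g \<omega>) \<partial>M)"
  have "a1 \<le> a2" unfolding a1_def a2_def
    by (rule nn_integral_mono_AE) (use assms in \<open>auto intro: e2ennreal_mono\<close>)
  moreover have "b2 \<le> b1" unfolding b1_def b2_def
    by (rule nn_integral_mono_AE) (use assms in \<open>eventually_elim, auto intro!: e2ennreal_mono\<close>)
  ultimately show ?thesis
    unfolding ereal_expectation_def Let_def
      a1_def[symmetric] b1_def[symmetric] a2_def[symmetric] b2_def[symmetric]
    apply (cases "a1 = \<infinity> \<and> b1 = \<infinity>"; cases "a2 = \<infinity> \<and> b2 = \<infinity>")
     apply (auto simp: top_unique intro!: ereal_minus_mono simp flip: less_eq_ennreal.rep_eq)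
    apply (auto simp: enn2ereal_eq_ereal_enn2real less_top)
    done
qed

lemma ereal_expectation_mono:
  "(\<And>\<omega>. \<omega> \<in> space M \<Longrightarrow> f \<omega> \<le> g \<omega>) \<Longrightarrow> ereal_expectation M f \<le> ereal_expectation M g"
  by (rule ereal_expectation_mono_AE) auto

lemma ereal_expectation_cong_AE:
  "AE \<omega> in M. f \<omega> = g \<omega> \<Longrightarrow> ereal_expectation M f = ereal_expectation M g"
  by (intro antisym ereal_expectation_mono_AE) (auto elim: AE_mp)

lemma ereal_expectation_ge:
  "- enn2ereal (\<integral>\<^sup>+\<omega>. e2ennreal (- f \<omega>) \<partial>M) \<le> ereal_expectation M f"
proof -
  have "- y \<le> x - y" if "0 \<le> x" for x y :: ereal
    using that by (cases x; cases y) auto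
  then show ?thesis
    unfolding ereal_expectation_def Let_def by auto
qed

lemma ereal_expectation_const:
  assumes "prob_space M"
  shows "ereal_expectation M (\<lambda>_. c) = c"
proof -
  have sp: "emeasure M (space M) = 1" using assms prob_space.emeasure_space_1 by blast
  show ?thesis
    unfolding ereal_expectation_def Let_def nn_integral_const sp
    apply (cases c)
    subgoal for r
      by (cases "0 \<le> r") (auto simp: e2ennreal_ereal enn2ereal_ennreal ennreal_neg zero_ennreal.rep_eq)
    by (auto simp: e2ennreal_ereal enn2ereal_ennreal e2ennreal_neg zero_ennreal.rep_eq)
qed

lemma ereal_expectation_real:
  fixes f :: "'b \<Rightarrow> real"
  assumes "integrable M f"
  shows "ereal_expectation M (\<lambda>\<omega>. ereal (f \<omega>)) = ereal (integral\<^sup>L M f)"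
proof -
  have n: "(\<integral>\<^sup>+ x. ennreal (norm (f x)) \<partial>M) < \<infinity>" using assms integrable_iff_bounded by blast
  have a: "(\<integral>\<^sup>+ x. ennreal (f x) \<partial>M) < \<infinity>"
    by (rule le_less_trans[OF _ n], rule nn_integral_mono) auto
  have b: "(\<integral>\<^sup>+ x. ennreal (- f x) \<partial>M) < \<infinity>"
    by (rule le_less_trans[OF _ n], rule nn_integral_mono) auto
  show ?thesis
    unfolding ereal_expectation_def Let_def using a b
    by (simp add: e2ennreal_ereal real_lebesgue_integral_def[OF assms] enn2ereal_eq_ereal_enn2real less_top)
qed

lemma integrable_real_of_ereal:
  fixes Z :: "'b \<Rightarrow> ereal"
  assumes Zm: "Z \<in> borel_measurable M"
    and Zp: "(\<integral>\<^sup>+\<omega>. e2ennreal (Z \<omega>) \<partial>M) < \<infinity>"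
    and Zn: "(\<integral>\<^sup>+\<omega>. e2ennreal (- Z \<omega>) \<partial>M) < \<infinity>"
  shows AE_ereal_real_of_ereal: "AE \<omega> in M. Z \<omega> = ereal (real_of_ereal (Z \<omega>))"
    and "integrable M (\<lambda>\<omega>. real_of_ereal (Z \<omega>))"
    and ereal_expectation_eq_integral: "ereal_expectation M Z = ereal (\<integral>\<omega>. real_of_ereal (Z \<omega>) \<partial>M)"
proof -
  have m1: "(\<lambda>\<omega>. e2ennreal (Z \<omega>)) \<in> borel_measurable M"
    using measurable_compose[OF Zm measurable_e2ennreal] by simp
  have m2: "(\<lambda>\<omega>. e2ennreal (- Z \<omega>)) \<in> borel_measurable M"
    using measurable_compose[OF borel_measurable_uminus_eq_ereal[THEN iffD2, OF Zm] measurable_e2ennreal]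
    by simp
  have "AE \<omega> in M. e2ennreal (Z \<omega>) \<noteq> \<infinity>" "AE \<omega> in M. e2ennreal (- Z \<omega>) \<noteq> \<infinity>"
    using Zp Zn by (intro nn_integral_PInf_AE m1 m2; simp)+
  then show ae: "AE \<omega> in M. Z \<omega> = ereal (real_of_ereal (Z \<omega>))"
  proof eventually_elim
    fix \<omega> show "e2ennreal (Z \<omega>) \<noteq> \<infinity> \<Longrightarrow> e2ennreal (- Z \<omega>) \<noteq> \<infinity> \<Longrightarrow> Z \<omega> = ereal (real_of_ereal (Z \<omega>))"
      by (cases "Z \<omega>") auto
  qed
  have "(\<integral>\<^sup>+ \<omega>. ennreal (norm (real_of_ereal (Z \<omega>))) \<partial>M)
       = (\<integral>\<^sup>+ \<omega>. e2ennreal (Z \<omega>) + e2ennreal (- Z \<omega>) \<partial>M)"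
  proof (rule nn_integral_cong_AE)
    show "AE \<omega> in M. ennreal (norm (real_of_ereal (Z \<omega>))) = e2ennreal (Z \<omega>) + e2ennreal (- Z \<omega>)"
      using ae
    proof eventually_elim
      fix \<omega> assume "Z \<omega> = ereal (real_of_ereal (Z \<omega>))"
      then obtain r where r: "Z \<omega> = ereal r" by metis
      then show "ennreal (norm (real_of_ereal (Z \<omega>))) = e2ennreal (Z \<omega>) + e2ennreal (- Z \<omega>)"
        by (cases "0 \<le> r") (auto simp: e2ennreal_ereal ennreal_neg)
    qed
  qed
  also have "\<dots> = (\<integral>\<^sup>+ \<omega>. e2ennreal (Z \<omega>) \<partial>M) + (\<integral>\<^sup>+ \<omega>. e2ennreal (- Z \<omega>) \<partial>M)"
    by (rule nn_integral_add) (use m1 m2 in auto)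
  also have "\<dots> < \<infinity>" using Zp Zn by (simp add: less_top)
  finally show int: "integrable M (\<lambda>\<omega>. real_of_ereal (Z \<omega>))"
    unfolding integrable_iff_bounded using Zm by auto
  have "ereal_expectation M Z = ereal_expectation M (\<lambda>\<omega>. ereal (real_of_ereal (Z \<omega>)))"
    by (rule ereal_expectation_cong_AE) (use ae in auto)
  also have "\<dots> = ereal (\<integral>\<omega>. real_of_ereal (Z \<omega>) \<partial>M)"
    by (rule ereal_expectation_real[OF int])
  finally show "ereal_expectation M Z = ereal (\<integral>\<omega>. real_of_ereal (Z \<omega>) \<partial>M)" .
qed

lemma ereal_INF_minus_SUP:
  fixes A B :: "nat \<Rightarrow> ereal"
  assumes Ad: "decseq A" and Bi: "incseq B"
    and Af: "\<And>n. \<bar>A n\<bar> \<noteq> \<infinity>" and Bf: "\<And>n. \<bar>B n\<bar> \<noteq> \<infinity>"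
    and A0: "\<And>n. 0 \<le> A n" and B0: "\<And>n. 0 \<le> B n"
  shows "(INF n. A n - B n) = (INF n. A n) - (SUP n. B n)"
proof (rule antisym)
  show "(INF n. A n) - (SUP n. B n) \<le> (INF n. A n - B n)"
    by (intro INF_greatest ereal_minus_mono INF_lower SUP_upper) auto
  have IA: "0 \<le> (INF n. A n)" "(INF n. A n) \<le> A 0" using A0 by (auto intro: INF_greatest INF_lower)
  have IAf: "\<bar>INF n. A n\<bar> \<noteq> \<infinity>" using IA Af[of 0] by auto
  show "(INF n. A n - B n) \<le> (INF n. A n) - (SUP n. B n)"
  proof (cases "(SUP n. B n) = \<infinity>")
    case True
    have "(INF n. A n - B n) \<le> (INF n. A 0 - B n)"
      by (intro INF_mono) (use Ad in \<open>auto intro!: ereal_minus_mono simp: decseq_def\<close>)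
    also have "\<dots> = A 0 - (SUP n. B n)"
      using Af[of 0] by (subst INF_ereal_minus_right) auto
    finally show ?thesis using True Af[of 0] IAf by auto
  next
    case False
    have SBf: "\<bar>SUP n. B n\<bar> \<noteq> \<infinity>" using False B0[of 0] SUP_upper[of 0 UNIV B] by auto
    have "(\<lambda>n. A n - B n) \<longlonglongrightarrow> (INF n. A n) - (SUP n. B n)"
      by (intro tendsto_diff_ereal IAf SBf LIMSEQ_INF LIMSEQ_SUP Ad Bi)
    moreover have "(\<lambda>n. A n - B n) \<longlonglongrightarrow> (INF n. A n - B n)"
      using Ad Bi by (intro LIMSEQ_INF) (auto simp: decseq_def incseq_def intro!: ereal_minus_mono)
    ultimately show ?thesis using LIMSEQ_unique by (metis order_refl)
  qed
qed

lemma nn_integral_e2ennreal_decseq: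
  fixes f :: "nat \<Rightarrow> 'b \<Rightarrow> ereal"
  assumes meas: "\<And>n. f n \<in> borel_measurable M"
    and dec: "\<And>\<omega> m n. \<omega> \<in> space M \<Longrightarrow> m \<le> n \<Longrightarrow> f n \<omega> \<le> f m \<omega>"
    and lim: "\<And>\<omega>. \<omega> \<in> space M \<Longrightarrow> (\<lambda>n. f n \<omega>) \<longlonglongrightarrow> h \<omega>"
    and pos_fin: "(\<integral>\<^sup>+\<omega>. e2ennreal (f 0 \<omega>) \<partial>M) < \<infinity>"
  shows "(\<integral>\<^sup>+\<omega>. e2ennreal (h \<omega>) \<partial>M) = (INF n. \<integral>\<^sup>+\<omega>. e2ennreal (f n \<omega>) \<partial>M)"
    and "(\<integral>\<^sup>+\<omega>. e2ennreal (- h \<omega>) \<partial>M) = (SUP n. \<integral>\<^sup>+\<omega>. e2ennreal (- f n \<omega>) \<partial>M)"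
proof -
  have "(\<integral>\<^sup>+\<omega>. e2ennreal (h \<omega>) \<partial>M) = (\<integral>\<^sup>+\<omega>. (INF n. e2ennreal (f n \<omega>)) \<partial>M)"
  proof (rule nn_integral_cong)
    fix \<omega> assume w: "\<omega> \<in> space M"
    have "(\<lambda>n. e2ennreal (f n \<omega>)) \<longlonglongrightarrow> (INF n. e2ennreal (f n \<omega>))"
      by (rule LIMSEQ_INF) (auto simp: decseq_def intro!: e2ennreal_mono dec w)
    moreover have "(\<lambda>n. e2ennreal (f n \<omega>)) \<longlonglongrightarrow> e2ennreal (h \<omega>)"
      by (intro tendsto_e2ennrealI lim w)
    ultimately show "e2ennreal (h \<omega>) = (INF n. e2ennreal (f n \<omega>))"
      using LIMSEQ_unique by metis
  qed
  also have "\<dots> = (INF n. \<integral>\<^sup>+\<omega>. e2ennreal (f n \<omega>) \<partial>M)"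
    by (rule nn_integral_monotone_convergence_INF_AE[where i=0])
      (use pos_fin in \<open>auto intro!: AE_I2 e2ennreal_mono dec
         measurable_compose[OF meas measurable_e2ennreal]\<close>)
  finally show "(\<integral>\<^sup>+\<omega>. e2ennreal (h \<omega>) \<partial>M) = (INF n. \<integral>\<^sup>+\<omega>. e2ennreal (f n \<omega>) \<partial>M)" .
  have "(\<integral>\<^sup>+\<omega>. e2ennreal (- h \<omega>) \<partial>M) = (\<integral>\<^sup>+\<omega>. (SUP n. e2ennreal (- f n \<omega>)) \<partial>M)"
  proof (rule nn_integral_cong)
    fix \<omega> assume w: "\<omega> \<in> space M"
    have "(\<lambda>n. e2ennreal (- f n \<omega>)) \<longlonglongrightarrow> (SUP n. e2ennreal (- f n \<omega>))"
      by (rule LIMSEQ_SUP) (auto simp: incseq_def intro!: e2ennreal_mono dec w)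
    moreover have "(\<lambda>n. e2ennreal (- f n \<omega>)) \<longlonglongrightarrow> e2ennreal (- h \<omega>)"
      by (intro tendsto_e2ennrealI tendsto_uminus_ereal lim w)
    ultimately show "e2ennreal (- h \<omega>) = (SUP n. e2ennreal (- f n \<omega>))"
      using LIMSEQ_unique by metis
  qed
  also have "\<dots> = (SUP n. \<integral>\<^sup>+\<omega>. e2ennreal (- f n \<omega>) \<partial>M)"
    by (rule nn_integral_monotone_convergence_SUP_AE)
      (auto intro!: AE_I2 e2ennreal_mono dec measurable_compose[OF _ measurable_e2ennreal] meas)
  finally show "(\<integral>\<^sup>+\<omega>. e2ennreal (- h \<omega>) \<partial>M) = (SUP n. \<integral>\<^sup>+\<omega>. e2ennreal (- f n \<omega>) \<partial>M)" .
qed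

text \<open>Monotone convergence from above; the limit may have expectation \<open>-\<infinity>\<close>.\<close>

lemma ereal_expectation_decseq:
  fixes f :: "nat \<Rightarrow> 'b \<Rightarrow> ereal"
  assumes meas: "\<And>n. f n \<in> borel_measurable M"
    and dec: "\<And>\<omega> m n. \<omega> \<in> space M \<Longrightarrow> m \<le> n \<Longrightarrow> f n \<omega> \<le> f m \<omega>"
    and lim: "\<And>\<omega>. \<omega> \<in> space M \<Longrightarrow> (\<lambda>n. f n \<omega>) \<longlonglongrightarrow> h \<omega>"
    and pos_fin: "\<And>n. (\<integral>\<^sup>+\<omega>. e2ennreal (f n \<omega>) \<partial>M) < \<infinity>"
    and neg_fin: "\<And>n. (\<integral>\<^sup>+\<omega>. e2ennreal (- f n \<omega>) \<partial>M) < \<infinity>"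
  shows "ereal_expectation M h = (INF n. ereal_expectation M (f n))"
proof -
  define a where "a n = (\<integral>\<^sup>+\<omega>. e2ennreal (f n \<omega>) \<partial>M)" for n
  define b where "b n = (\<integral>\<^sup>+\<omega>. e2ennreal (- f n \<omega>) \<partial>M)" for n
  have a_lim: "(\<integral>\<^sup>+\<omega>. e2ennreal (h \<omega>) \<partial>M) = (INF n. a n)"
    unfolding a_def by (rule nn_integral_e2ennreal_decseq(1)[OF meas dec lim pos_fin])
  have b_lim: "(\<integral>\<^sup>+\<omega>. e2ennreal (- h \<omega>) \<partial>M) = (SUP n. b n)"
    unfolding b_def by (rule nn_integral_e2ennreal_decseq(2)[OF meas dec lim pos_fin])
  have a_dec: "decseq a" and b_inc: "incseq b"
    unfolding decseq_def incseq_def a_def b_def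
    by (auto intro!: nn_integral_mono e2ennreal_mono dec)
  have fin: "(INF n. a n) < \<infinity>" using pos_fin[of 0] unfolding a_def by (metis INF_lower UNIV_I le_less_trans)
  have "ereal_expectation M (f n) = enn2ereal (a n) - enn2ereal (b n)" for n
    using pos_fin[of n] unfolding ereal_expectation_def Let_def a_def b_def by auto
  then have "(INF n. ereal_expectation M (f n)) = (INF n. enn2ereal (a n) - enn2ereal (b n))"
    by simp
  also have "\<dots> = (INF n. enn2ereal (a n)) - (SUP n. enn2ereal (b n))"
  proof (rule ereal_INF_minus_SUP)
    show "decseq (\<lambda>n. enn2ereal (a n))" "incseq (\<lambda>n. enn2ereal (b n))"
      using a_dec b_inc by (auto simp: decseq_def incseq_def simp flip: less_eq_ennreal.rep_eq)
  qed (use pos_fin neg_fin in \<open>auto simp: a_def b_def enn2ereal_eq_ereal_enn2real\<close>)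
  also have "\<dots> = enn2ereal (INF n. a n) - enn2ereal (SUP n. b n)"
  proof -
    have "0 \<le> (SUP n. enn2ereal (b n))" by (rule order_trans[OF _ SUP_upper[of 0]]) auto
    then show ?thesis by (simp add: Inf_ennreal.rep_eq Sup_ennreal.rep_eq image_image max_absorb2)
  qed
  finally show ?thesis
    using fin unfolding ereal_expectation_def Let_def a_lim b_lim by auto
qed

lemma positive_part_integral_pos:
  fixes f :: "nat \<Rightarrow> 'b \<Rightarrow> real"
  assumes "prob_space M"
    and f_int: "\<And>n. integrable M (f n)" and Z_int: "integrable M Z"
    and ev: "AE \<omega> in M. \<exists>N. Z \<omega> < f N \<omega>"
  shows "\<exists>n. 0 < (\<integral>\<omega>. max (f n \<omega> - Z \<omega>) 0 \<partial>M)"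
proof (rule ccontr)
  interpret prob_space M by (rule assms(1))
  assume "\<not> ?thesis"
  moreover have "0 \<le> (\<integral>\<omega>. max (f n \<omega> - Z \<omega>) 0 \<partial>M)" for n
    by (rule integral_nonneg_AE) auto
  ultimately have zero: "(\<integral>\<omega>. max (f n \<omega> - Z \<omega>) 0 \<partial>M) = 0" for n
    by (meson antisym not_less)
  have int: "integrable M (\<lambda>\<omega>. max (f n \<omega> - Z \<omega>) 0)" for n
    by (intro integrable_max Bochner_Integration.integrable_diff f_int Z_int) auto
  have "AE \<omega> in M. max (f n \<omega> - Z \<omega>) 0 = 0" for n
    using integral_nonneg_eq_0_iff_AE[OF int] zero by auto
  then have "AE \<omega> in M. \<forall>n. max (f n \<omega> - Z \<omega>) 0 = 0"
    by (simp add: AE_all_countable)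
  then have "AE \<omega> in M. False"
    using ev
  proof eventually_elim
    fix \<omega> assume "\<forall>n. max (f n \<omega> - Z \<omega>) 0 = 0" "\<exists>N. Z \<omega> < f N \<omega>"
    then show False by (metis diff_gt_0_iff_gt max.strict_order_iff)
  qed
  then show False by simp
qed

lemma integral_less_eventually:
  fixes f :: "nat \<Rightarrow> 'b \<Rightarrow> real"
  assumes "prob_space M"
    and f_int: "\<And>n. integrable M (f n)" and Z_int: "integrable M Z"
    and f_mono: "\<And>\<omega> m n. \<omega> \<in> space M \<Longrightarrow> m \<le> n \<Longrightarrow> f m \<omega> \<le> f n \<omega>"
    and ev: "AE \<omega> in M. \<exists>N. Z \<omega> < f N \<omega>"
  shows "\<exists>n. integral\<^sup>L M Z < integral\<^sup>L M (f n)"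
proof -
  have max_int: "integrable M (\<lambda>\<omega>. max (f n \<omega> - Z \<omega>) 0)" for n
    by (intro integrable_max Bochner_Integration.integrable_diff f_int Z_int) auto
  obtain n1 where \<delta>: "0 < (\<integral>\<omega>. max (f n1 \<omega> - Z \<omega>) 0 \<partial>M)"
    using positive_part_integral_pos[OF assms(1) f_int Z_int ev] by blast
  define \<delta> where "\<delta> = (\<integral>\<omega>. max (f n1 \<omega> - Z \<omega>) 0 \<partial>M)"
  have "(\<lambda>n. \<integral>\<omega>. min (f (n1 + n) \<omega> - Z \<omega>) 0 \<partial>M) \<longlonglongrightarrow> integral\<^sup>L M (\<lambda>_. 0::real)"
  proof (rule integral_dominated_convergence[where w="\<lambda>\<omega>. \<bar>f n1 \<omega> - Z \<omega>\<bar>"])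
    show "(\<lambda>\<omega>. min (f (n1 + n) \<omega> - Z \<omega>) 0) \<in> borel_measurable M" for n
      using f_int Z_int by (intro borel_measurable_min borel_measurable_diff) auto
    show "integrable M (\<lambda>\<omega>. \<bar>f n1 \<omega> - Z \<omega>\<bar>)"
      by (intro integrable_abs Bochner_Integration.integrable_diff f_int Z_int)
    show "AE \<omega> in M. (\<lambda>n. min (f (n1 + n) \<omega> - Z \<omega>) 0) \<longlonglongrightarrow> 0"
      using ev AE_space
    proof eventually_elim
      fix \<omega> assume "\<exists>N. Z \<omega> < f N \<omega>" and w: "\<omega> \<in> space M"
      then obtain N where N: "Z \<omega> < f N \<omega>" by auto
      have "\<forall>\<^sub>F n in sequentially. min (f (n1 + n) \<omega> - Z \<omega>) 0 = 0"
        unfolding eventually_sequentially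
      proof (intro exI[of _ N] allI impI)
        fix n assume "N \<le> n"
        then have "f N \<omega> \<le> f (n1 + n) \<omega>" by (intro f_mono[OF w]) auto
        then show "min (f (n1 + n) \<omega> - Z \<omega>) 0 = 0" using N by auto
      qed
      then show "(\<lambda>n. min (f (n1 + n) \<omega> - Z \<omega>) 0) \<longlonglongrightarrow> 0"
        by (rule tendsto_eventually)
    qed
    show "AE \<omega> in M. norm (min (f (n1 + n) \<omega> - Z \<omega>) 0) \<le> \<bar>f n1 \<omega> - Z \<omega>\<bar>" for n
      using f_mono[of _ n1 "n1 + n"] by (intro AE_I2) force
  qed simp
  then have "\<forall>\<^sub>F n in sequentially. - \<delta> < (\<integral>\<omega>. min (f (n1 + n) \<omega> - Z \<omega>) 0 \<partial>M)"
    using \<delta> by (intro order_tendstoD(1)) (auto simp: \<delta>_def)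
  then obtain n2 where n2: "- \<delta> < (\<integral>\<omega>. min (f (n1 + n2) \<omega> - Z \<omega>) 0 \<partial>M)"
    by (auto simp: eventually_sequentially)
  define K where "K = n1 + n2"
  have "(\<integral>\<omega>. f K \<omega> - Z \<omega> \<partial>M) = (\<integral>\<omega>. max (f K \<omega> - Z \<omega>) 0 + min (f K \<omega> - Z \<omega>) 0 \<partial>M)"
    by (rule Bochner_Integration.integral_cong) auto
  also have "\<dots> = (\<integral>\<omega>. max (f K \<omega> - Z \<omega>) 0 \<partial>M) + (\<integral>\<omega>. min (f K \<omega> - Z \<omega>) 0 \<partial>M)"
    by (rule Bochner_Integration.integral_add)
      (use f_int Z_int in \<open>auto intro!: integrable_max integrable_min\<close>)
  finally have split: "(\<integral>\<omega>. f K \<omega> - Z \<omega> \<partial>M)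
      = (\<integral>\<omega>. max (f K \<omega> - Z \<omega>) 0 \<partial>M) + (\<integral>\<omega>. min (f K \<omega> - Z \<omega>) 0 \<partial>M)" .
  have "\<delta> \<le> (\<integral>\<omega>. max (f K \<omega> - Z \<omega>) 0 \<partial>M)"
    unfolding \<delta>_def K_def by (rule integral_mono[OF max_int max_int])
      (use f_mono[of _ n1 "n1 + n2"] in \<open>force intro: max.mono\<close>)
  then have "0 < (\<integral>\<omega>. f K \<omega> - Z \<omega> \<partial>M)" using split n2 unfolding K_def by linarith
  then show ?thesis
    using Bochner_Integration.integral_diff[OF f_int Z_int] by (intro exI[of _ K]) simp
qed

locale utility_family = prob_space M for M :: "'b measure" +
  fixes V :: "'b \<Rightarrow> real \<Rightarrow> ereal"
  assumes V_finite: "\<And>\<omega> c. \<omega> \<in> space M \<Longrightarrow> 0 < c \<Longrightarrow> \<bar>V \<omega> c\<bar> \<noteq> \<infinity>"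
    and V_strict_mono: "\<And>\<omega> x y. \<omega> \<in> space M \<Longrightarrow> 0 \<le> x \<Longrightarrow> x < y \<Longrightarrow> V \<omega> x < V \<omega> y"
    and V_isCont: "\<And>\<omega> c. \<omega> \<in> space M \<Longrightarrow> 0 < c \<Longrightarrow> isCont (\<lambda>x. real_of_ereal (V \<omega> x)) c"
    and V_0: "\<And>\<omega>. \<omega> \<in> space M \<Longrightarrow> V \<omega> 0 = (INF c\<in>{0<..}. V \<omega> c)"
    and V_measurable: "\<And>c. 0 < c \<Longrightarrow> (\<lambda>\<omega>. V \<omega> c) \<in> borel_measurable M"
    and V_integrable: "\<And>c. 0 < c \<Longrightarrow> integrable M (\<lambda>\<omega>. real_of_ereal (V \<omega> c))"
begin

definition Vr :: "real \<Rightarrow> 'b \<Rightarrow> real" where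
  "Vr c \<omega> = real_of_ereal (V \<omega> c)"

definition EV :: "real \<Rightarrow> ereal" where
  "EV c = ereal_expectation M (\<lambda>\<omega>. V \<omega> c)"

lemma integrable_Vr: "0 < c \<Longrightarrow> integrable M (Vr c)"
  using V_integrable unfolding Vr_def by (simp add: fun_eq_iff)

lemma V_eq_Vr: "\<omega> \<in> space M \<Longrightarrow> 0 < c \<Longrightarrow> V \<omega> c = ereal (Vr c \<omega>)"
  using V_finite[of \<omega> c] unfolding Vr_def by (cases "V \<omega> c") auto

lemma V_mono: "\<omega> \<in> space M \<Longrightarrow> 0 \<le> x \<Longrightarrow> x \<le> y \<Longrightarrow> V \<omega> x \<le> V \<omega> y"
  using V_strict_mono[of \<omega> x y] by (cases "x = y") auto

lemma Vr_strict_mono: "\<omega> \<in> space M \<Longrightarrow> 0 < x \<Longrightarrow> x < y \<Longrightarrow> Vr x \<omega> < Vr y \<omega>"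
  using V_strict_mono[of \<omega> x y] V_eq_Vr[of \<omega> x] V_eq_Vr[of \<omega> y] by auto

lemma Vr_mono: "\<omega> \<in> space M \<Longrightarrow> 0 < x \<Longrightarrow> x \<le> y \<Longrightarrow> Vr x \<omega> \<le> Vr y \<omega>"
  using Vr_strict_mono[of \<omega> x y] by (cases "x = y") auto

lemma EV_eq_integral: "0 < c \<Longrightarrow> EV c = ereal (integral\<^sup>L M (Vr c))"
  unfolding EV_def ereal_expectation_real[OF integrable_Vr, symmetric]
  by (auto intro!: ereal_expectation_cong_AE AE_I2 simp: V_eq_Vr)

lemma EV_mono: "0 \<le> x \<Longrightarrow> x \<le> y \<Longrightarrow> EV x \<le> EV y"
  unfolding EV_def by (rule ereal_expectation_mono) (auto intro: V_mono)

lemma EV_strict_mono_pos: "0 < x \<Longrightarrow> x < y \<Longrightarrow> EV x < EV y"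
  using integral_less_AE_space[of "Vr x" "Vr y"]
  by (auto simp: EV_eq_integral integrable_Vr emeasure_space_1 intro!: AE_I2 Vr_strict_mono)

lemma EV_strict_mono: "0 \<le> x \<Longrightarrow> x < y \<Longrightarrow> EV x < EV y"
  using EV_mono[of x "y/2"] EV_strict_mono_pos[of x y] EV_strict_mono_pos[of "y/2" y]
  by (cases "x = 0") auto

lemma V_0_eq_INF_seq: "\<omega> \<in> space M \<Longrightarrow> V \<omega> 0 = (INF n. V \<omega> (1 / Suc n))"
proof -
  assume w: "\<omega> \<in> space M"
  have "(INF n. V \<omega> (1 / Suc n)) \<le> V \<omega> c" if "0 < c" for c
  proof -
    obtain n where "1 / real (Suc n) < c" using nat_approx_posE \<open>0 < c\<close> by auto
    then show ?thesis by (intro INF_lower2[of n] V_mono[OF w]) auto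
  qed
  moreover have "(INF c\<in>{0<..}. V \<omega> c) \<le> V \<omega> (1 / Suc n)" for n
    by (rule INF_lower) auto
  ultimately show ?thesis
    unfolding V_0[OF w] by (intro antisym INF_greatest) auto
qed

lemma measurable_V_0: "(\<lambda>\<omega>. V \<omega> 0) \<in> borel_measurable M"
proof -
  have "(\<lambda>\<omega>. INF n. V \<omega> (1 / Suc n)) \<in> borel_measurable M"
    by (intro borel_measurable_INF V_measurable) auto
  then show ?thesis
    by (rule measurable_cong[THEN iffD1, rotated]) (simp add: V_0_eq_INF_seq)
qed

lemma isCont_integral_Vr:
  assumes c: "0 < c"
  shows "isCont (\<lambda>x. integral\<^sup>L M (Vr x)) c"
  unfolding continuous_at_sequentially comp_def
proof (intro allI impI)
  fix x :: "nat \<Rightarrow> real" assume x: "x \<longlonglongrightarrow> c"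
  have "\<forall>\<^sub>F n in sequentially. c/2 < x n \<and> x n < 2 * c"
    using x c by (intro eventually_conj order_tendstoD) auto
  then obtain N where N: "\<And>n. N \<le> n \<Longrightarrow> c/2 < x n \<and> x n < 2 * c"
    unfolding eventually_sequentially by blast
  have "(\<lambda>n. integral\<^sup>L M (Vr (x (n + N)))) \<longlonglongrightarrow> integral\<^sup>L M (Vr c)"
  proof (rule integral_dominated_convergence[where w="\<lambda>\<omega>. \<bar>Vr (c/2) \<omega>\<bar> + \<bar>Vr (2*c) \<omega>\<bar>"])
    show "Vr (x (n + N)) \<in> borel_measurable M" for n
      using N[of "n+N"] c integrable_Vr by auto
    show "integrable M (\<lambda>\<omega>. \<bar>Vr (c/2) \<omega>\<bar> + \<bar>Vr (2*c) \<omega>\<bar>)"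
      using c by (intro Bochner_Integration.integrable_add integrable_abs integrable_Vr) auto
    show "AE \<omega> in M. (\<lambda>n. Vr (x (n + N)) \<omega>) \<longlonglongrightarrow> Vr c \<omega>"
    proof (rule AE_I2)
      fix \<omega> assume w: "\<omega> \<in> space M"
      have "isCont (\<lambda>y. Vr y \<omega>) c" using V_isCont[OF w c] unfolding Vr_def .
      then show "(\<lambda>n. Vr (x (n + N)) \<omega>) \<longlonglongrightarrow> Vr c \<omega>"
        using LIMSEQ_ignore_initial_segment[OF x] by (rule isCont_tendsto_compose)
    qed
    show "AE \<omega> in M. norm (Vr (x (n + N)) \<omega>) \<le> \<bar>Vr (c/2) \<omega>\<bar> + \<bar>Vr (2*c) \<omega>\<bar>" for n
    proof (rule AE_I2)
      fix \<omega> assume w: "\<omega> \<in> space M"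
      have "Vr (c/2) \<omega> \<le> Vr (x (n+N)) \<omega>" "Vr (x (n+N)) \<omega> \<le> Vr (2*c) \<omega>"
        using N[of "n+N"] c by (auto intro!: Vr_mono w)
      then show "norm (Vr (x (n + N)) \<omega>) \<le> \<bar>Vr (c/2) \<omega>\<bar> + \<bar>Vr (2*c) \<omega>\<bar>" by auto
    qed
  qed (use c integrable_Vr in auto)
  then show "(\<lambda>n. integral\<^sup>L M (Vr (x n))) \<longlonglongrightarrow> integral\<^sup>L M (Vr c)"
    by (rule LIMSEQ_offset)
qed

lemma V_parts_finite:
  assumes "0 < c"
  shows "(\<integral>\<^sup>+\<omega>. e2ennreal (V \<omega> c) \<partial>M) < \<infinity>" and "(\<integral>\<^sup>+\<omega>. e2ennreal (- V \<omega> c) \<partial>M) < \<infinity>"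
proof -
  have bounded: "(\<integral>\<^sup>+ \<omega>. ennreal (norm (Vr c \<omega>)) \<partial>M) < \<infinity>"
    using integrable_Vr[OF assms] integrable_iff_bounded by blast
  have "(\<integral>\<^sup>+\<omega>. e2ennreal (V \<omega> c) \<partial>M) = (\<integral>\<^sup>+\<omega>. ennreal (Vr c \<omega>) \<partial>M)"
    "(\<integral>\<^sup>+\<omega>. e2ennreal (- V \<omega> c) \<partial>M) = (\<integral>\<^sup>+\<omega>. ennreal (- Vr c \<omega>) \<partial>M)"
    using assms by (auto intro!: nn_integral_cong simp: V_eq_Vr e2ennreal_ereal)
  moreover have "(\<integral>\<^sup>+\<omega>. ennreal (Vr c \<omega>) \<partial>M) \<le> (\<integral>\<^sup>+ \<omega>. ennreal (norm (Vr c \<omega>)) \<partial>M)"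
    "(\<integral>\<^sup>+\<omega>. ennreal (- Vr c \<omega>) \<partial>M) \<le> (\<integral>\<^sup>+ \<omega>. ennreal (norm (Vr c \<omega>)) \<partial>M)"
    by (auto intro!: nn_integral_mono)
  ultimately show "(\<integral>\<^sup>+\<omega>. e2ennreal (V \<omega> c) \<partial>M) < \<infinity>" "(\<integral>\<^sup>+\<omega>. e2ennreal (- V \<omega> c) \<partial>M) < \<infinity>"
    using bounded by (auto simp: le_less_trans)
qed

lemma EV_0_eq_INF: "EV 0 = (INF n. EV (1 / Suc n))"
  unfolding EV_def
proof (rule ereal_expectation_decseq)
  show "(\<lambda>\<omega>. V \<omega> (1 / Suc n)) \<in> borel_measurable M" for n
    by (rule V_measurable) auto
  show "V \<omega> (1 / Suc n) \<le> V \<omega> (1 / Suc m)" if "\<omega> \<in> space M" "m \<le> n" for \<omega> m n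
    using that by (intro V_mono) (auto simp: frac_le)
  show "(\<lambda>n. V \<omega> (1 / Suc n)) \<longlonglongrightarrow> V \<omega> 0" if w: "\<omega> \<in> space M" for \<omega>
    unfolding V_0_eq_INF_seq[OF w]
    by (rule LIMSEQ_INF) (auto simp: decseq_def frac_le intro!: V_mono w)
qed (rule V_parts_finite; simp)+
lemma V_eq_SUP_rat:
  assumes w: "\<omega> \<in> space M" and x: "0 \<le> x"
  shows "V \<omega> x = (SUP q\<in>{q\<in>\<rat>. 0 < q}. if q < x then V \<omega> q else V \<omega> 0)"
proof (rule antisym)
  show "(SUP q\<in>{q\<in>\<rat>. 0 < q}. if q < x then V \<omega> q else V \<omega> 0) \<le> V \<omega> x"
    by (rule SUP_least) (use x in \<open>auto intro!: V_mono[OF w]\<close>)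
  show "V \<omega> x \<le> (SUP q\<in>{q\<in>\<rat>. 0 < q}. if q < x then V \<omega> q else V \<omega> 0)"
  proof (cases "x = 0")
    case True
    then show ?thesis by (intro SUP_upper2[of 1]) auto
  next
    case False
    then have xp: "0 < x" using x by auto
    show ?thesis
    proof (rule dense_le)
      fix y assume y: "y < V \<omega> x"
      show "y \<le> (SUP q\<in>{q\<in>\<rat>. 0 < q}. if q < x then V \<omega> q else V \<omega> 0)"
      proof (cases y)
        case (real r)
        have "r < Vr x \<omega>" using y real V_eq_Vr[OF w xp] by auto
        then obtain d where d: "d > 0" "\<And>z. dist z x < d \<Longrightarrow> dist (Vr z \<omega>) (Vr x \<omega>) < Vr x \<omega> - r"
          using V_isCont[OF w xp, unfolded continuous_at_eps_delta] unfolding Vr_def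
          by (metis diff_gt_0_iff_gt)
        obtain q where q: "q \<in> \<rat>" "max (x - d) 0 < q" "q < x"
          using Rats_dense_in_real[of "max (x - d) 0" x] xp d by auto
        then have "r < Vr q \<omega>" using d(2)[of q] by (auto simp: dist_real_def)
        then have "y \<le> V \<omega> q" using real V_eq_Vr[OF w, of q] q by auto
        also have "\<dots> \<le> (SUP q\<in>{q\<in>\<rat>. 0 < q}. if q < x then V \<omega> q else V \<omega> 0)"
          using q by (intro SUP_upper2[of q]) auto
        finally show ?thesis .
      qed (use y in auto)
    qed
  qed
qed

lemma measurable_V_comp:
  assumes g: "g \<in> borel_measurable M" "\<And>\<omega>. \<omega> \<in> space M \<Longrightarrow> 0 \<le> g \<omega>"
  shows "(\<lambda>\<omega>. V \<omega> (g \<omega>)) \<in> borel_measurable M"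
proof -
  have "(\<lambda>\<omega>. SUP q\<in>{q\<in>\<rat>. 0 < q}. if q < g \<omega> then V \<omega> q else V \<omega> 0) \<in> borel_measurable M"
  proof (rule borel_measurable_SUP)
    show "countable {q\<in>\<rat>. 0 < q}"
      by (rule countable_subset[OF _ countable_rat]) auto
    fix q :: real assume "q \<in> {q\<in>\<rat>. 0 < q}"
    then show "(\<lambda>\<omega>. if q < g \<omega> then V \<omega> q else V \<omega> 0) \<in> borel_measurable M"
      using g(1) by (intro measurable_If V_measurable measurable_V_0) auto
  qed
  then show ?thesis
    by (rule measurable_cong[THEN iffD1, rotated]) (simp add: V_eq_SUP_rat g(2))
qed

lemma EV_exceeds:
  assumes g: "g \<in> borel_measurable M" "\<And>\<omega>. \<omega> \<in> space M \<Longrightarrow> 0 \<le> g \<omega>"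
    and Vg_pos: "(\<integral>\<^sup>+\<omega>. e2ennreal (V \<omega> (g \<omega>)) \<partial>M) < \<infinity>"
    and Vg_neg: "(\<integral>\<^sup>+\<omega>. e2ennreal (- V \<omega> (g \<omega>)) \<partial>M) < \<infinity>"
  shows "\<exists>K>0. ereal_expectation M (\<lambda>\<omega>. V \<omega> (g \<omega>)) < EV K"
proof -
  define Z where "Z \<omega> = real_of_ereal (V \<omega> (g \<omega>))" for \<omega>
  have "(\<lambda>\<omega>. V \<omega> (g \<omega>)) \<in> borel_measurable M" using g by (rule measurable_V_comp)
  note Vg = integrable_real_of_ereal[OF this Vg_pos Vg_neg, folded Z_def]
  have "AE \<omega> in M. \<exists>N. Z \<omega> < Vr (Suc N) \<omega>"
    using Vg(1)
  proof (elim AE_mp, intro AE_I2 impI)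
    fix \<omega> assume w: "\<omega> \<in> space M" and Z: "V \<omega> (g \<omega>) = ereal (Z \<omega>)"
    obtain N where N: "g \<omega> < real (Suc N)" using reals_Archimedean2 by (metis less_Suc_eq of_nat_less_iff order.strict_trans)
    have "V \<omega> (g \<omega>) < V \<omega> (Suc N)" by (rule V_strict_mono[OF w g(2)[OF w] N])
    then show "\<exists>N. Z \<omega> < Vr (Suc N) \<omega>" using Z V_eq_Vr[OF w, of "Suc N"] by auto
  qed
  then obtain n where "integral\<^sup>L M Z < integral\<^sup>L M (Vr (Suc n))"
    using integral_less_eventually[OF prob_space_axioms, of "\<lambda>n. Vr (Suc n)" Z] Vg(2) integrable_Vr Vr_mono
    by (force simp: Z_def[abs_def])
  then show ?thesis
    using Vg(3) EV_eq_integral[of "Suc n"] by (intro exI[of _ "real (Suc n)"]) auto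
qed

lemma ex1_certainty_equivalent:
  assumes g: "g \<in> borel_measurable M" "\<And>\<omega>. \<omega> \<in> space M \<Longrightarrow> 0 \<le> g \<omega>"
    and Vg_pos: "(\<integral>\<^sup>+\<omega>. e2ennreal (V \<omega> (g \<omega>)) \<partial>M) < \<infinity>"
    and Vg_neg: "(\<integral>\<^sup>+\<omega>. e2ennreal (- V \<omega> (g \<omega>)) \<partial>M) < \<infinity>"
  shows "\<exists>!c. 0 \<le> c \<and> EV c = ereal_expectation M (\<lambda>\<omega>. V \<omega> (g \<omega>))"
proof (rule ex_ex1I)
  define z where "z = ereal_expectation M (\<lambda>\<omega>. V \<omega> (g \<omega>))"
  have z: "z = ereal (\<integral>\<omega>. real_of_ereal (V \<omega> (g \<omega>)) \<partial>M)"
    unfolding z_def using measurable_V_comp[OF g] Vg_pos Vg_neg by (rule ereal_expectation_eq_integral)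
  have EV0: "EV 0 \<le> z"
    unfolding EV_def z_def by (rule ereal_expectation_mono) (auto intro: V_mono g(2))
  obtain K where K: "0 < K" "z < EV K" using EV_exceeds[OF g Vg_pos Vg_neg] by (auto simp: z_def)
  show "\<exists>c. 0 \<le> c \<and> EV c = z"
  proof (cases "EV 0 = z")
    case False
    then have "(INF n. EV (1 / Suc n)) < z" using EV0 EV_0_eq_INF by auto
    then obtain n where n: "EV (1 / Suc n) < z" by (auto simp: INF_less_iff)
    define e where "e = 1 / real (Suc n)"
    have e: "0 < e" unfolding e_def by auto
    have eK: "e < K"
    proof (rule ccontr)
      assume "\<not> e < K"
      then have "EV K \<le> EV e" using K by (intro EV_mono) auto
      then show False using n K unfolding e_def by auto
    qed
    have "integral\<^sup>L M (Vr e) \<le> real_of_ereal z" "real_of_ereal z \<le> integral\<^sup>L M (Vr K)"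
      using n K EV_eq_integral[OF e] EV_eq_integral[OF K(1)] z unfolding e_def by auto
    moreover have "continuous_on {e..K} (\<lambda>x. integral\<^sup>L M (Vr x))"
      by (rule continuous_at_imp_continuous_on) (use e in \<open>auto intro!: isCont_integral_Vr\<close>)
    ultimately obtain c where c: "e \<le> c" "c \<le> K" "integral\<^sup>L M (Vr c) = real_of_ereal z"
      using IVT'[of "\<lambda>x. integral\<^sup>L M (Vr x)" e "real_of_ereal z" K] eK by auto
    then show ?thesis using EV_eq_integral[of c] e z by (intro exI[of _ c]) auto
  qed auto
next
  fix c d
  assume "0 \<le> c \<and> EV c = ereal_expectation M (\<lambda>\<omega>. V \<omega> (g \<omega>))"
    and "0 \<le> d \<and> EV d = ereal_expectation M (\<lambda>\<omega>. V \<omega> (g \<omega>))"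
  then show "c = d" using EV_strict_mono[of c d] EV_strict_mono[of d c] by (cases c d rule: linorder_cases) auto
qed

end

lemma Polish_space_imp_second_countable:
  assumes "Polish_space X" shows "second_countable X"
proof -
  obtain M d where Md: "Metric_space M d" and X: "X = Metric_space.mtopology M d"
    using assms unfolding Polish_space_def completely_metrizable_space_def by blast
  interpret Metric_space M d by (rule Md)
  obtain C where C: "countable C" "C \<subseteq> topspace X" "X closure_of C = topspace X"
    using assms unfolding Polish_space_def separable_space_def by blast
  define B where "B = (\<lambda>(c, n). mball c (1 / Suc n)) ` (C \<times> (UNIV :: nat set))"
  show ?thesis
    unfolding second_countable_def
  proof (intro exI[of _ B] conjI allI impI ballI)
    show "countable B" unfolding B_def using C(1) by auto
    show "openin X V" if "V \<in> B" for V using that unfolding B_def X by auto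
    fix U x assume Ux: "openin X U \<and> x \<in> U"
    then obtain r where r: "r > 0" "mball x r \<subseteq> U"
      unfolding X openin_mtopology by blast
    have xM: "x \<in> M" using Ux unfolding X openin_mtopology by blast
    obtain n where n: "1 / real (Suc n) < r / 2" using r(1) nat_approx_posE[of "r/2"] by auto
    have "x \<in> X closure_of C" using C(3) xM X by auto
    then obtain c where c: "c \<in> C" "c \<in> mball x (1 / Suc n)"
      unfolding in_closure_of using xM
      by (metis X centre_in_mball_iff of_nat_0_less_iff openin_mball zero_less_Suc zero_less_divide_1_iff)
    show "\<exists>V\<in>B. x \<in> V \<and> V \<subseteq> U"
    proof (intro bexI[of _ "mball c (1 / Suc n)"] conjI)
      show "mball c (1 / real (Suc n)) \<in> B" unfolding B_def using c by auto
      show "x \<in> mball c (1 / real (Suc n))" using c xM commute by auto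
      have "mball c (1 / real (Suc n)) \<subseteq> mball x r"
        by (rule mball_subset) (use c n xM commute in auto)
      then show "mball c (1 / real (Suc n)) \<subseteq> U" using r by auto
    qed
  qed
qed

lemma second_countableE:
  assumes "second_countable X"
  obtains B where "countable B" "\<And>V. V \<in> B \<Longrightarrow> openin X V"
    "\<And>U x. openin X U \<Longrightarrow> x \<in> U \<Longrightarrow> \<exists>V\<in>B. x \<in> V \<and> V \<subseteq> U"
proof -
  from assms obtain B where "countable B" "\<forall>V \<in> B. openin X V"
     "\<forall>U x. openin X U \<and> x \<in> U \<longrightarrow> (\<exists>V \<in> B. x \<in> V \<and> V \<subseteq> U)"
    unfolding second_countable_def by (elim exE conjE)
  then show ?thesis using that by simp
qed

lemma sets_borel_of: "sets (borel_of Y) = sigma_sets (topspace Y) {U. openin Y U}"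
  unfolding borel_of_def by (rule sets_measure_of) (auto dest: openin_subset)

lemma space_borel_of: "space (borel_of Y) = topspace Y"
  unfolding borel_of_def by (rule space_measure_of) (auto dest: openin_subset)

lemma openin_in_borel_of: "openin Y U \<Longrightarrow> U \<in> sets (borel_of Y)"
  unfolding sets_borel_of by auto

lemma borel_of_subset_topspace: "A \<in> sets (borel_of Y) \<Longrightarrow> A \<subseteq> topspace Y"
  using sets.sets_into_space[of A "borel_of Y"] unfolding space_borel_of by simp

lemma measurable_borel_of_continuous_map:
  assumes "continuous_map Y Z f"
  shows "f \<in> measurable (borel_of Y) (borel_of Z)"
  unfolding borel_of_def[of Z]
proof (rule measurable_measure_of)
  show "f \<in> space (borel_of Y) \<rightarrow> topspace Z"
    using assms by (auto simp: space_borel_of continuous_map_def)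
  show "f -` U \<inter> space (borel_of Y) \<in> sets (borel_of Y)" if "U \<in> {U. openin Z U}" for U
    using openin_continuous_map_preimage[OF assms] that
    by (auto intro!: openin_in_borel_of simp: space_borel_of Int_commute vimage_def Collect_conj_eq)
qed (auto dest: openin_subset)

lemma topspace_Om: "topspace (Om X s) = (\<Pi>\<^sub>E i\<in>{1..s}. topspace (X i))"
  unfolding Om_def by (simp add: topspace_product_topology)

lemma continuous_map_Om_restrict: "continuous_map (Om X (Suc s)) (Om X s) (\<lambda>f. restrict f {1..s})"
  unfolding Om_def continuous_map_componentwise
  by (auto intro!: continuous_map_product_projection)

lemma continuous_map_Om_last: "continuous_map (Om X (Suc s)) (X (Suc s)) (\<lambda>f. f (Suc s))"
  unfolding Om_def by (rule continuous_map_product_projection) auto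

lemma continuous_map_Om_fun_upd:
  assumes "\<omega> \<in> topspace (Om X s)"
  shows "continuous_map (X (Suc s)) (Om X (Suc s)) (\<lambda>x. fun_upd \<omega> (Suc s) x)"
  unfolding Om_def continuous_map_componentwise
proof (intro conjI ballI)
  have \<omega>: "\<omega> \<in> extensional {1..s}" "\<And>i. i \<in> {1..s} \<Longrightarrow> \<omega> i \<in> topspace (X i)"
    using assms unfolding topspace_Om by (auto simp: PiE_iff)
  then show "(\<lambda>x. fun_upd \<omega> (Suc s) x) ` topspace (X (Suc s)) \<subseteq> extensional {1..Suc s}"
    by (auto simp: extensional_def)
  fix k assume k: "k \<in> {1..Suc s}"
  show "continuous_map (X (Suc s)) (X k) (\<lambda>x. fun_upd \<omega> (Suc s) x k)"
  proof (cases "k = Suc s")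
    case False
    then show ?thesis using k \<omega>(2)[of k] by (simp add: continuous_map_const)
  qed simp
qed

lemma Om_fun_upd:
  assumes "\<omega> \<in> topspace (Om X s)"
  shows "fun_upd \<omega> (Suc s) x \<in> topspace (Om X (Suc s)) \<longleftrightarrow> x \<in> topspace (X (Suc s))"
    and "restrict (fun_upd \<omega> (Suc s) x) {1..s} = \<omega>"
  using assms unfolding topspace_Om
  by (auto simp: PiE_iff extensional_def restrict_def fun_eq_iff)

definition rect :: "(nat \<Rightarrow> 'a topology) \<Rightarrow> nat \<Rightarrow> (nat \<Rightarrow> 'a) set \<Rightarrow> 'a set \<Rightarrow> (nat \<Rightarrow> 'a) set" where
  "rect X s A B = {f \<in> topspace (Om X (Suc s)). restrict f {1..s} \<in> A \<and> f (Suc s) \<in> B}"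

definition Rects :: "(nat \<Rightarrow> 'a topology) \<Rightarrow> nat \<Rightarrow> (nat \<Rightarrow> 'a) set set" where
  "Rects X s = {rect X s A B | A B. A \<in> sets (borel_of (Om X s)) \<and> B \<in> sets (borel_of (X (Suc s)))}"

lemma rect_eq_vimage:
  "rect X s A B = ((\<lambda>f. restrict f {1..s}) -` A \<inter> space (borel_of (Om X (Suc s))))
    \<inter> ((\<lambda>f. f (Suc s)) -` B \<inter> space (borel_of (Om X (Suc s))))"
  unfolding rect_def space_borel_of by auto

lemma openin_rect:
  assumes "openin (Om X s) A" "openin (X (Suc s)) B"
  shows "openin (Om X (Suc s)) (rect X s A B)"
proof -
  have "rect X s A B = {f \<in> topspace (Om X (Suc s)). restrict f {1..s} \<in> A} \<inter>
                       {f \<in> topspace (Om X (Suc s)). f (Suc s) \<in> B}"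
    unfolding rect_def by auto
  also have "openin (Om X (Suc s)) \<dots>"
    by (intro openin_Int openin_continuous_map_preimage[OF continuous_map_Om_restrict[of X s] assms(1)]
        openin_continuous_map_preimage[OF continuous_map_Om_last[of X s] assms(2)])
  finally show ?thesis .
qed

lemma Rects_subset_borel: "Rects X s \<subseteq> sets (borel_of (Om X (Suc s)))"
proof
  fix R assume "R \<in> Rects X s"
  then obtain A B where AB: "R = rect X s A B"
    "A \<in> sets (borel_of (Om X s))" "B \<in> sets (borel_of (X (Suc s)))"
    unfolding Rects_def by auto
  have "(\<lambda>f. restrict f {1..s}) -` A \<inter> space (borel_of (Om X (Suc s))) \<in> sets (borel_of (Om X (Suc s)))"
    by (rule measurable_sets[OF measurable_borel_of_continuous_map[OF continuous_map_Om_restrict[of X s]] AB(2)])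
  moreover have "(\<lambda>f. f (Suc s)) -` B \<inter> space (borel_of (Om X (Suc s))) \<in> sets (borel_of (Om X (Suc s)))"
    by (rule measurable_sets[OF measurable_borel_of_continuous_map[OF continuous_map_Om_last[of X s]] AB(3)])
  ultimately show "R \<in> sets (borel_of (Om X (Suc s)))"
    unfolding AB(1) rect_eq_vimage by (rule sets.Int)
qed

lemma Int_stable_Rects: "Int_stable (Rects X s)"
  unfolding Int_stable_def Rects_def
proof safe
  fix A B A' B'
  assume "A \<in> sets (borel_of (Om X s))" "B \<in> sets (borel_of (X (Suc s)))"
    "A' \<in> sets (borel_of (Om X s))" "B' \<in> sets (borel_of (X (Suc s)))"
  then show "\<exists>A'' B''. rect X s A B \<inter> rect X s A' B' = rect X s A'' B'' \<and>
     A'' \<in> sets (borel_of (Om X s)) \<and> B'' \<in> sets (borel_of (X (Suc s)))"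
    by (intro exI[of _ "A \<inter> A'"] exI[of _ "B \<inter> B'"]) (auto simp: rect_def)
qed

lemma Rects_Pow: "Rects X s \<subseteq> Pow (topspace (Om X (Suc s)))"
  unfolding Rects_def rect_def by auto

lemma rect_neighbourhood_base:
  assumes BA: "\<And>U x. openin (Om X s) U \<Longrightarrow> x \<in> U \<Longrightarrow> \<exists>V\<in>\<A>. x \<in> V \<and> V \<subseteq> U"
    and BB: "\<And>U x. openin (X (Suc s)) U \<Longrightarrow> x \<in> U \<Longrightarrow> \<exists>V\<in>\<B>. x \<in> V \<and> V \<subseteq> U"
    and W: "openin (Om X (Suc s)) W" "f \<in> W"
  shows "\<exists>A\<in>\<A>. \<exists>B\<in>\<B>. f \<in> rect X s A B \<and> rect X s A B \<subseteq> W"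
proof -
  obtain U where U: "\<forall>i\<in>{1..Suc s}. openin (X i) (U i)" "f \<in> Pi\<^sub>E {1..Suc s} U" "Pi\<^sub>E {1..Suc s} U \<subseteq> W"
    using W unfolding Om_def openin_product_topology_alt by blast
  have "openin (Om X s) (Pi\<^sub>E {1..s} U)"
    unfolding Om_def using U(1) by (subst openin_PiE) auto
  moreover have "restrict f {1..s} \<in> Pi\<^sub>E {1..s} U" using U(2) by auto
  ultimately obtain A where A: "A \<in> \<A>" "restrict f {1..s} \<in> A" "A \<subseteq> Pi\<^sub>E {1..s} U"
    using BA by blast
  have "openin (X (Suc s)) (U (Suc s))" "f (Suc s) \<in> U (Suc s)" using U(1,2) by auto
  then obtain B where B: "B \<in> \<B>" "f (Suc s) \<in> B" "B \<subseteq> U (Suc s)"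
    using BB by blast
  have "rect X s A B \<subseteq> Pi\<^sub>E {1..Suc s} U"
  proof
    fix g assume "g \<in> rect X s A B"
    then have g: "g \<in> topspace (Om X (Suc s))" "restrict g {1..s} \<in> A" "g (Suc s) \<in> B"
      unfolding rect_def by auto
    then have g: "g \<in> topspace (Om X (Suc s))" "restrict g {1..s} \<in> Pi\<^sub>E {1..s} U" "g (Suc s) \<in> U (Suc s)"
      using subsetD[OF A(3) g(2)] subsetD[OF B(3) g(3)] by auto
    have "g i \<in> U i" if "i \<in> {1..Suc s}" for i
      using g(2,3) that by (cases "i = Suc s") (auto simp: PiE_iff)
    then show "g \<in> Pi\<^sub>E {1..Suc s} U" using g(1) unfolding topspace_Om by (auto simp: PiE_iff)
  qed
  moreover have "f \<in> rect X s A B"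
    using openin_subset[OF W(1)] W(2) A(2) B(2) unfolding rect_def by auto
  ultimately show ?thesis using A(1) B(1) U(3) by blast
qed

lemma second_countable_Om: "(\<forall>t\<in>{1..n}. second_countable (X t)) \<Longrightarrow> second_countable (Om X n)"
proof (induction n)
  case 0
  have ts: "topspace (Om X 0) = {\<lambda>_. undefined}" unfolding topspace_Om by simp
  show ?case
    unfolding second_countable_def
  proof (intro exI[of _ "{topspace (Om X 0)}"] conjI allI impI ballI)
    fix U x assume "openin (Om X 0) U \<and> x \<in> U"
    then have U: "U \<subseteq> topspace (Om X 0)" "x \<in> U" using openin_subset by blast+
    then have "U = topspace (Om X 0)" unfolding ts by blast
    then show "\<exists>V\<in>{topspace (Om X 0)}. x \<in> V \<and> V \<subseteq> U" using \<open>x \<in> U\<close> by auto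
  qed auto
next
  case (Suc n)
  have sc: "\<forall>t\<in>{1..n}. second_countable (X t)" using Suc.prems by simp
  have "second_countable (Om X n)" using Suc.IH[OF sc] .
  then obtain \<A> where A: "countable \<A>" "\<And>V. V \<in> \<A> \<Longrightarrow> openin (Om X n) V"
      "\<And>U x. openin (Om X n) U \<Longrightarrow> x \<in> U \<Longrightarrow> \<exists>V\<in>\<A>. x \<in> V \<and> V \<subseteq> U"
    by (rule second_countableE) blast
  have "second_countable (X (Suc n))" using Suc.prems by simp
  then obtain \<B> where B: "countable \<B>" "\<And>V. V \<in> \<B> \<Longrightarrow> openin (X (Suc n)) V"
      "\<And>U x. openin (X (Suc n)) U \<Longrightarrow> x \<in> U \<Longrightarrow> \<exists>V\<in>\<B>. x \<in> V \<and> V \<subseteq> U"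
    by (rule second_countableE) blast
  show ?case
    unfolding second_countable_def
  proof (intro exI[of _ "(\<lambda>(A, B). rect X n A B) ` (\<A> \<times> \<B>)"] conjI allI impI ballI)
    show "countable ((\<lambda>(A, B). rect X n A B) ` (\<A> \<times> \<B>))"
      by (intro countable_image countable_SIGMA A(1) B(1))
    show "openin (Om X (Suc n)) V" if V: "V \<in> (\<lambda>(A, B). rect X n A B) ` (\<A> \<times> \<B>)" for V
    proof -
      obtain A' B' where "A' \<in> \<A>" "B' \<in> \<B>" "V = rect X n A' B'" using V by fastforce
      then show ?thesis using openin_rect[OF A(2) B(2)] by simp
    qed
    fix U x assume Ux: "openin (Om X (Suc n)) U \<and> x \<in> U"
    obtain A' B' where AB: "A' \<in> \<A>" "B' \<in> \<B>" "x \<in> rect X n A' B'" "rect X n A' B' \<subseteq> U"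
      using rect_neighbourhood_base[OF A(3) B(3), where W=U and f=x] Ux by blast
    have mem: "rect X n A' B' \<in> (\<lambda>(A, B). rect X n A B) ` (\<A> \<times> \<B>)"
      using AB(1,2) by (auto intro!: image_eqI[of _ _ "(A', B')"])
    show "\<exists>V\<in>(\<lambda>(A, B). rect X n A B) ` (\<A> \<times> \<B>). x \<in> V \<and> V \<subseteq> U"
      by (rule bexI[OF _ mem]) (use AB(3,4) in blast)
  qed
qed

lemma sets_borel_Om_Suc_subset:
  assumes "second_countable (Om X s)" "second_countable (X (Suc s))"
  shows "sets (borel_of (Om X (Suc s))) \<subseteq> sigma_sets (topspace (Om X (Suc s))) (Rects X s)"
  unfolding sets_borel_of
proof (rule sigma_sets_mono, safe)
  fix W assume W: "openin (Om X (Suc s)) W"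
  obtain \<A> where A: "countable \<A>" "\<And>V. V \<in> \<A> \<Longrightarrow> openin (Om X s) V"
      "\<And>U x. openin (Om X s) U \<Longrightarrow> x \<in> U \<Longrightarrow> \<exists>V\<in>\<A>. x \<in> V \<and> V \<subseteq> U"
    using assms(1) by (rule second_countableE) blast
  obtain \<B> where B: "countable \<B>" "\<And>V. V \<in> \<B> \<Longrightarrow> openin (X (Suc s)) V"
      "\<And>U x. openin (X (Suc s)) U \<Longrightarrow> x \<in> U \<Longrightarrow> \<exists>V\<in>\<B>. x \<in> V \<and> V \<subseteq> U"
    using assms(2) by (rule second_countableE) blast
  define C where "C = {R \<in> (\<lambda>(A, B). rect X s A B) ` (\<A> \<times> \<B>). R \<subseteq> W}"
  have "W = \<Union> C"
  proof
    show "W \<subseteq> \<Union> C"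
    proof
      fix f assume "f \<in> W"
      then obtain A B where "A \<in> \<A>" "B \<in> \<B>" "f \<in> rect X s A B" "rect X s A B \<subseteq> W"
        using rect_neighbourhood_base[OF A(3) B(3) W] by blast
      then show "f \<in> \<Union> C" unfolding C_def by blast
    qed
  qed (auto simp: C_def)
  also have "\<Union> C \<in> sigma_sets (topspace (Om X (Suc s))) (Rects X s)"
  proof (rule sigma_sets_UNION)
    show "countable C" unfolding C_def using A(1) B(1) by auto
    fix R assume "R \<in> C"
    then obtain A B where "A \<in> \<A>" "B \<in> \<B>" "R = rect X s A B" unfolding C_def by auto
    then have "R \<in> Rects X s" unfolding Rects_def using A(2) B(2) by (auto intro!: openin_in_borel_of)
    then show "R \<in> sigma_sets (topspace (Om X (Suc s))) (Rects X s)" by auto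
  qed
  finally show "W \<in> sigma_sets (topspace (Om X (Suc s))) (Rects X s)" .
qed

lemma space_univ_space: "space (univ_space Y) = topspace Y"
  unfolding univ_space_def by (rule space_measure_of) (auto simp: univ_sets_def)

lemma sets_univ_space: "sets (univ_space Y) = sigma_sets (topspace Y) (univ_sets Y)"
  unfolding univ_space_def by (rule sets_measure_of) (auto simp: univ_sets_def)

lemma probsD:
  assumes "P \<in> probs Y"
  shows "prob_space P" "sets P = sets (borel_of Y)" "space P = topspace Y"
    "prob_space (completion P)" "space (completion P) = topspace Y"
  using assms prob_space.prob_space_completion unfolding probs_def by auto

lemma univ_sets_subset_completion: "P \<in> probs Y \<Longrightarrow> univ_sets Y \<subseteq> sets (completion P)"
  unfolding univ_sets_def by auto

lemma measurable_completion_of_univ: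
  assumes P: "P \<in> probs Y" and f: "f \<in> measurable (univ_space Y) N"
  shows "f \<in> measurable (completion P) N"
proof (rule measurable_from_subalg[OF _ f])
  show "subalgebra (completion P) (univ_space Y)"
    unfolding subalgebra_def
  proof
    show "space (univ_space Y) = space (completion P)"
      using probsD(5)[OF P] space_univ_space by simp
    have "sigma_algebra (topspace Y) (sets (completion P))"
      using sets.sigma_algebra_axioms[of "completion P"] probsD(5)[OF P] by simp
    then show "sets (univ_space Y) \<subseteq> sets (completion P)"
      unfolding sets_univ_space
      by (rule sigma_algebra.sigma_sets_subset) (rule univ_sets_subset_completion[OF P])
  qed
qed

lemma qs_imp_AE:
  assumes "qs Y Qs Prop" "P \<in> Qs" "P \<in> probs Y"
  shows "AE \<omega> in completion P. Prop \<omega>"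
proof -
  obtain N where N: "N \<in> univ_sets Y" "emeasure (completion P) N = 0" "{\<omega>\<in>topspace Y. \<not> Prop \<omega>} \<subseteq> N"
    using assms(1,2) unfolding qs_def by blast
  show ?thesis
    by (rule AE_I[of _ _ N]) (use N univ_sets_subset_completion[OF assms(3)] probsD(5)[OF assms(3)] in auto)
qed

definition slice :: "(nat \<Rightarrow> 'a topology) \<Rightarrow> nat \<Rightarrow> (nat \<Rightarrow> 'a) \<Rightarrow> (nat \<Rightarrow> 'a) set \<Rightarrow> 'a set" where
  "slice X s \<omega> A = {x \<in> topspace (X (Suc s)). fun_upd \<omega> (Suc s) x \<in> A}"

lemma kcomp_eq_slice:
  "kcomp X (Suc s) P p = measure_of (topspace (Om X (Suc s))) (sets (borel_of (Om X (Suc s))))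
     (\<lambda>A. \<integral>\<^sup>+ \<omega>. emeasure (p \<omega>) (slice X s \<omega> A) \<partial>completion P)"
  unfolding kcomp_def slice_def by simp

lemma slice_in_borel:
  assumes "\<omega> \<in> topspace (Om X s)" "A \<in> sets (borel_of (Om X (Suc s)))"
  shows "slice X s \<omega> A \<in> sets (borel_of (X (Suc s)))"
proof -
  have "slice X s \<omega> A = (\<lambda>x. fun_upd \<omega> (Suc s) x) -` A \<inter> space (borel_of (X (Suc s)))"
    unfolding slice_def space_borel_of by auto
  then show ?thesis
    using measurable_borel_of_continuous_map[OF continuous_map_Om_fun_upd[OF assms(1)]] assms(2)
    by (simp add: measurable_sets)
qed

lemma slice_rect:
  assumes "\<omega> \<in> topspace (Om X s)" "B \<subseteq> topspace (X (Suc s))"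
  shows "slice X s \<omega> (rect X s A B) = (if \<omega> \<in> A then B else {})"
  using assms Om_fun_upd[OF assms(1)] unfolding slice_def rect_def by auto

lemma slice_Diff:
  assumes "\<omega> \<in> topspace (Om X s)"
  shows "slice X s \<omega> (topspace (Om X (Suc s)) - A) = topspace (X (Suc s)) - slice X s \<omega> A"
  using Om_fun_upd(1)[OF assms] unfolding slice_def by auto

lemma slice_UN: "slice X s \<omega> (\<Union>i. A i) = (\<Union>i. slice X s \<omega> (A i))"
  unfolding slice_def by auto

lemma disjoint_family_slice: "disjoint_family A \<Longrightarrow> disjoint_family (\<lambda>i. slice X s \<omega> (A i))"
  unfolding disjoint_family_on_def slice_def by auto

lemma SK_probs: "SK X (Suc s) p \<Longrightarrow> \<omega> \<in> topspace (Om X s) \<Longrightarrow> p \<omega> \<in> probs (X (Suc s))"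
  unfolding SK_def by auto

lemma emeasure_eq_measure_prob: "prob_space M \<Longrightarrow> emeasure M A = ennreal (measure M A)"
  by (simp add: finite_measure.emeasure_eq_measure prob_space_def)

lemma sigma_sets_Rects_subset_borel:
  "sigma_sets (topspace (Om X (Suc s))) (Rects X s) \<subseteq> sets (borel_of (Om X (Suc s)))"
  using sigma_algebra.sigma_sets_subset[OF sets.sigma_algebra_axioms[of "borel_of (Om X (Suc s))"]
      Rects_subset_borel]
  by (simp add: space_borel_of)

text \<open>Measurability of slice measures: for rectangles it is the kernel property, and it extends
  to the generated \<open>\<sigma>\<close>-algebra by Dynkin's \<open>\<pi>\<close>-\<open>\<lambda>\<close> argument.\<close>

lemma measurable_emeasure_slice:
  assumes P: "P \<in> probs (Om X s)" and p: "SK X (Suc s) p"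
    and A: "A \<in> sigma_sets (topspace (Om X (Suc s))) (Rects X s)"
  shows "(\<lambda>\<omega>. emeasure (p \<omega>) (slice X s \<omega> A)) \<in> borel_measurable (completion P)"
proof -
  have space_P: "\<omega> \<in> topspace (Om X s)" if "\<omega> \<in> space (completion P)" for \<omega>
    using probsD(5)[OF P] that by auto
  note p_probs = probsD[OF SK_probs[OF p space_P]]
  have slice_in_p: "slice X s \<omega> A \<in> sets (p \<omega>)"
    if "\<omega> \<in> space (completion P)" "A \<in> sigma_sets (topspace (Om X (Suc s))) (Rects X s)" for \<omega> A
    using slice_in_borel[OF space_P[OF that(1)] subsetD[OF sigma_sets_Rects_subset_borel that(2)]]
      p_probs(2)[OF that(1)] by simp
  show ?thesis
    using Int_stable_Rects Rects_Pow A
  proof (induction rule: sigma_sets_induct_disjoint)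
    case (basic R)
    then obtain A B where R: "R = rect X s A B"
      and A: "A \<in> sets (borel_of (Om X s))" and B: "B \<in> sets (borel_of (X (Suc s)))"
      unfolding Rects_def by auto
    have kernel: "(\<lambda>\<omega>. measure (p \<omega>) B) \<in> borel_measurable (completion P)"
      using p B measurable_completion_of_univ[OF P] unfolding SK_def by auto
    have "(\<lambda>\<omega>. indicator A \<omega> * ennreal (measure (p \<omega>) B)) \<in> borel_measurable (completion P)"
    proof (intro borel_measurable_times_ennreal borel_measurable_indicator measurable_compose[OF kernel])
      show "A \<in> sets (completion P)" using A probsD(2)[OF P] by auto
    qed auto
    moreover have "emeasure (p \<omega>) (slice X s \<omega> R) = indicator A \<omega> * ennreal (measure (p \<omega>) B)"
      if "\<omega> \<in> space (completion P)" for \<omega>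
      using slice_rect[OF space_P[OF that] borel_of_subset_topspace[OF B]]
        emeasure_eq_measure_prob[OF p_probs(1)[OF that]]
      by (simp add: R indicator_def)
    ultimately show ?case by (rule measurable_cong[THEN iffD2, rotated])
  next
    case empty
    show ?case by (simp add: slice_def)
  next
    case (compl A)
    have "(\<lambda>\<omega>. 1 - emeasure (p \<omega>) (slice X s \<omega> A)) \<in> borel_measurable (completion P)"
      using compl.IH by measurable
    moreover have "emeasure (p \<omega>) (slice X s \<omega> (topspace (Om X (Suc s)) - A))
        = 1 - emeasure (p \<omega>) (slice X s \<omega> A)" if "\<omega> \<in> space (completion P)" for \<omega>
      using emeasure_compl[OF slice_in_p[OF that compl.hyps]]
        prob_space.emeasure_space_1[OF p_probs(1)[OF that]]
        emeasure_eq_measure_prob[OF p_probs(1)[OF that]]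
      by (simp add: slice_Diff[OF space_P[OF that]] p_probs(3)[OF that])
    ultimately show ?case by (rule measurable_cong[THEN iffD2, rotated])
  next
    case (union A)
    have "(\<lambda>\<omega>. \<Sum>i. emeasure (p \<omega>) (slice X s \<omega> (A i))) \<in> borel_measurable (completion P)"
      using union.IH by (intro borel_measurable_suminf_order) auto
    moreover have "emeasure (p \<omega>) (slice X s \<omega> (\<Union>i. A i)) = (\<Sum>i. emeasure (p \<omega>) (slice X s \<omega> (A i)))"
      if "\<omega> \<in> space (completion P)" for \<omega>
    proof -
      have "range (\<lambda>i. slice X s \<omega> (A i)) \<subseteq> sets (p \<omega>)"
        using slice_in_p[OF that] union.hyps(2) by auto
      from suminf_emeasure[OF this disjoint_family_slice[OF union.hyps(1)]]
      show ?thesis unfolding slice_UN by simp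
    qed
    ultimately show ?case by (rule measurable_cong[THEN iffD2, rotated])
  qed
qed

lemma kcomp_in_probs:
  assumes P: "P \<in> probs (Om X s)" and p: "SK X (Suc s) p"
    and sc: "second_countable (Om X s)" "second_countable (X (Suc s))"
  shows "kcomp X (Suc s) P p \<in> probs (Om X (Suc s))"
proof -
  define \<Omega> where "\<Omega> = topspace (Om X (Suc s))"
  define \<F> where "\<F> = sets (borel_of (Om X (Suc s)))"
  define \<mu> where "\<mu> A = (\<integral>\<^sup>+ \<omega>. emeasure (p \<omega>) (slice X s \<omega> A) \<partial>completion P)" for A
  have space_P: "\<omega> \<in> topspace (Om X s)" if "\<omega> \<in> space (completion P)" for \<omega>
    using probsD(5)[OF P] that by auto
  note p_probs = probsD[OF SK_probs[OF p space_P]]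
  have kc: "kcomp X (Suc s) P p = measure_of \<Omega> \<F> \<mu>"
    unfolding kcomp_eq_slice \<mu>_def \<Omega>_def \<F>_def ..
  have sa: "sigma_algebra \<Omega> \<F>"
    using sets.sigma_algebra_axioms[of "borel_of (Om X (Suc s))"] unfolding space_borel_of \<Omega>_def \<F>_def .
  have ca: "countably_additive \<F> \<mu>"
    unfolding countably_additive_def
  proof (intro allI impI)
    fix A :: "nat \<Rightarrow> (nat \<Rightarrow> 'a) set"
    assume A: "range A \<subseteq> \<F>" "disjoint_family A" "\<Union> (range A) \<in> \<F>"
    have "(\<Sum>i. \<mu> (A i)) = (\<integral>\<^sup>+ \<omega>. (\<Sum>i. emeasure (p \<omega>) (slice X s \<omega> (A i))) \<partial>completion P)"
      unfolding \<mu>_def using A(1) sets_borel_Om_Suc_subset[OF sc]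
      by (intro nn_integral_suminf[symmetric] measurable_emeasure_slice[OF P p]) (auto simp: \<F>_def)
    also have "\<dots> = \<mu> (\<Union> (range A))"
      unfolding \<mu>_def
    proof (rule nn_integral_cong)
      fix \<omega> assume \<omega>: "\<omega> \<in> space (completion P)"
      have "range (\<lambda>i. slice X s \<omega> (A i)) \<subseteq> sets (p \<omega>)"
        using A(1) slice_in_borel[OF space_P[OF \<omega>]] p_probs(2)[OF \<omega>] unfolding \<F>_def by auto
      from suminf_emeasure[OF this disjoint_family_slice[OF A(2)]]
      show "(\<Sum>i. emeasure (p \<omega>) (slice X s \<omega> (A i))) = emeasure (p \<omega>) (slice X s \<omega> (\<Union> (range A)))"
        unfolding slice_UN by simp
    qed
    finally show "(\<Sum>i. \<mu> (A i)) = \<mu> (\<Union> (range A))" .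
  qed
  have "emeasure (kcomp X (Suc s) P p) \<Omega> = \<mu> \<Omega>"
    unfolding kc
  proof (rule emeasure_measure_of_sigma[OF sa _ ca])
    show "positive \<F> \<mu>" unfolding positive_def \<mu>_def slice_def by auto
    show "\<Omega> \<in> \<F>" unfolding \<Omega>_def \<F>_def by (rule openin_in_borel_of[OF openin_topspace])
  qed
  also have "\<dots> = (\<integral>\<^sup>+ \<omega>. 1 \<partial>completion P)"
    unfolding \<mu>_def
  proof (rule nn_integral_cong)
    fix \<omega> assume \<omega>: "\<omega> \<in> space (completion P)"
    have "slice X s \<omega> \<Omega> = space (p \<omega>)"
      unfolding slice_def \<Omega>_def p_probs(3)[OF \<omega>] using Om_fun_upd(1)[OF space_P[OF \<omega>]] by auto
    then show "emeasure (p \<omega>) (slice X s \<omega> \<Omega>) = 1"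
      using prob_space.emeasure_space_1[OF p_probs(1)[OF \<omega>]] by simp
  qed
  also have "\<dots> = 1" using prob_space.emeasure_space_1[OF probsD(4)[OF P]] by simp
  finally have "prob_space (kcomp X (Suc s) P p)"
    by (intro prob_spaceI) (simp add: kc space_measure_of_conv \<Omega>_def)
  moreover have "sets (kcomp X (Suc s) P p) = sets (borel_of (Om X (Suc s)))"
    unfolding kc \<F>_def[symmetric] by (rule sigma_algebra.sets_measure_of_eq[OF sa])
  ultimately show ?thesis
    unfolding probs_def by (simp add: kc space_measure_of_conv \<Omega>_def)
qed

lemma Qseq_in_probs:
  assumes Polish: "\<forall>t\<in>{1..T}. Polish_space (X t)"
    and SK_q: "\<forall>s<T. SK X (Suc s) (q (Suc s))"
  shows "s \<le> T \<Longrightarrow> Qseq X q s \<in> probs (Om X s)"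
proof (induction s)
  case 0
  have "(\<lambda>_. undefined) \<in> space (borel_of (Om X 0))"
    unfolding space_borel_of topspace_Om by simp
  with prob_space_return[OF this] show ?case
    unfolding probs_def by (simp add: space_borel_of)
next
  case (Suc s)
  have "second_countable (Om X s)"
    by (rule second_countable_Om) (use Polish Suc.prems in \<open>auto intro: Polish_space_imp_second_countable\<close>)
  moreover have "second_countable (X (Suc s))"
    using Polish Suc.prems by (auto intro: Polish_space_imp_second_countable)
  ultimately show ?case
    unfolding Qseq.simps using Suc SK_q by (intro kcomp_in_probs) auto
qed

lemma QT_in_probs:
  assumes "\<forall>t\<in>{1..T}. Polish_space (X t)" and "P \<in> QT X Qr T"
  shows "P \<in> probs (Om X T)"
  using assms Qseq_in_probs[of T X] unfolding QT_def by blast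

lemma utility_has_deriv:
  assumes "utility f" "0 < x"
  shows "(f has_real_derivative deriv f x) (at x)"
proof -
  obtain f' f'' where "\<forall>x>0. (f has_real_derivative f' x) (at x) \<and> (f' has_real_derivative f'' x) (at x)"
    using assms(1) unfolding utility_def C2_pos_def by blast
  then show ?thesis using assms(2) DERIV_imp_deriv by metis
qed

lemma utility_isCont: "utility f \<Longrightarrow> 0 < x \<Longrightarrow> isCont f x"
  using utility_has_deriv DERIV_isCont by blast

lemma utility_less: "utility f \<Longrightarrow> 0 < x \<Longrightarrow> x < y \<Longrightarrow> f x < f y"
  unfolding utility_def by (auto intro: strict_mono_onD)

lemma utility_le: "utility f \<Longrightarrow> 0 < x \<Longrightarrow> x \<le> y \<Longrightarrow> f x \<le> f y"
  using utility_less[of f x y] by (cases "x = y") auto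

lemma Uext_pos: "0 < x \<Longrightarrow> Uext f x = ereal (f x)"
  unfolding Uext_def by simp

lemma Uext_0:
  assumes u: "utility f"
  shows "Uext f 0 = (INF c\<in>{0<..}. Uext f c)"
proof -
  define I where "I = (INF c\<in>{0<..}. ereal (f c))"
  have "((\<lambda>y. ereal (f y)) \<longlongrightarrow> I) (at_right 0)"
    unfolding order_tendsto_iff
  proof (intro conjI allI impI)
    fix l assume l: "l < I"
    have "\<forall>\<^sub>F x in at_right (0::real). 0 < x" by (simp add: eventually_at_right_less)
    then show "\<forall>\<^sub>F x in at_right 0. l < ereal (f x)"
    proof eventually_elim
      fix x :: real assume "0 < x"
      then have "I \<le> ereal (f x)" unfolding I_def by (intro INF_lower) auto
      then show "l < ereal (f x)" using l by auto
    qed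
  next
    fix v assume "I < v"
    then obtain c where c: "0 < c" "ereal (f c) < v" unfolding I_def INF_less_iff by auto
    have "\<forall>\<^sub>F x in at_right (0::real). x \<in> {0<..<c}" by (rule eventually_at_right_real[OF c(1)])
    then show "\<forall>\<^sub>F x in at_right 0. ereal (f x) < v"
    proof eventually_elim
      fix x assume "x \<in> {0::real<..<c}"
      then have "ereal (f x) < ereal (f c)" using utility_less[OF u] by auto
      then show "ereal (f x) < v" using c(2) by order
    qed
  qed
  then have "Lim (at_right 0) (\<lambda>y. ereal (f y)) = I"
    by (intro tendsto_Lim) auto
  then show ?thesis unfolding Uext_def I_def by (auto intro!: INF_cong)
qed

lemma Uext_strict_mono:
  assumes u: "utility f" and "0 \<le> x" "x < y"
  shows "Uext f x < Uext f y"
proof (cases "x = 0")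
  case True
  have "Uext f 0 \<le> Uext f (y/2)" unfolding Uext_0[OF u] using assms by (intro INF_lower) auto
  also have "\<dots> < Uext f y" using assms utility_less[OF u, of "y/2" y] by (simp add: Uext_pos)
  finally show ?thesis using True by simp
next
  case False
  then show ?thesis using assms utility_less[OF u, of x y] by (simp add: Uext_pos)
qed

lemma Uext_mono: "utility f \<Longrightarrow> 0 \<le> x \<Longrightarrow> x \<le> y \<Longrightarrow> Uext f x \<le> Uext f y"
  using Uext_strict_mono[of f x y] by (cases "x = y") auto

lemma Uext_le_iff: "utility f \<Longrightarrow> 0 \<le> x \<Longrightarrow> 0 \<le> y \<Longrightarrow> Uext f x \<le> Uext f y \<longleftrightarrow> x \<le> y"
  using Uext_mono[of f x y] Uext_strict_mono[of f y x] by (cases "x \<le> y") auto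

lemma Uext_isCont:
  assumes u: "utility f" and c: "0 < c"
  shows "isCont (\<lambda>x. real_of_ereal (Uext f x)) c"
proof -
  have "\<forall>\<^sub>F x in nhds c. x \<in> {0<..}" by (rule eventually_nhds_in_open) (use c in auto)
  then have "\<forall>\<^sub>F x in nhds c. real_of_ereal (Uext f x) = f x"
    by eventually_elim (auto simp: Uext_pos)
  then have "isCont (\<lambda>x. real_of_ereal (Uext f x)) c = isCont f c" by (rule isCont_cong)
  with utility_isCont[OF u c] show ?thesis by simp
qed

lemma ex1_Uext_eq:
  assumes u: "utility f" and y: "Uext f 0 \<le> y" "y \<le> Uext f b" and b: "0 \<le> b"
  shows "\<exists>!c. 0 \<le> c \<and> Uext f c = y"
proof (rule ex_ex1I)
  show "\<exists>c. 0 \<le> c \<and> Uext f c = y"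
  proof (cases "y = Uext f 0")
    case False
    then have "(INF c\<in>{0<..}. Uext f c) < y" using y(1) Uext_0[OF u] by auto
    then obtain a where a: "0 < a" "ereal (f a) < y"
      by (auto simp: INF_less_iff Uext_pos)
    have ab: "a < b"
    proof (rule ccontr)
      assume "\<not> a < b"
      then have "Uext f b \<le> Uext f a" using b by (intro Uext_mono[OF u]) auto
      then show False using a y(2) by (simp add: Uext_pos)
    qed
    then have b0: "0 < b" using a by auto
    then obtain r where r: "y = ereal r" using a(2) y(2) by (cases y) (auto simp: Uext_pos)
    have "f a \<le> r" "r \<le> f b" using a r y(2) b0 by (auto simp: Uext_pos)
    moreover have "continuous_on {a..b} f"
      by (rule continuous_at_imp_continuous_on) (use a in \<open>auto intro!: utility_isCont[OF u]\<close>)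
    ultimately obtain c where "a \<le> c" "c \<le> b" "f c = r"
      using IVT'[of f a r b] ab by auto
    then show ?thesis using a r by (intro exI[of _ c]) (auto simp: Uext_pos)
  qed auto
next
  fix c d assume "0 \<le> c \<and> Uext f c = y" "0 \<le> d \<and> Uext f d = y"
  then show "c = d" using Uext_le_iff[OF u, of c d] Uext_le_iff[OF u, of d c] by auto
qed

lemma utility_chord_bound:
  assumes u: "utility f" and c: "1 < c"
  shows "f c \<le> (2 * c - 1) * f 1 - (2 * c - 2) * f (1/2)"
proof -
  define t where "t = 1 / (2 * c - 1)"
  have tt: "t * (2 * c - 1) = 1" and t: "0 \<le> t" "t \<le> 1"
    using c unfolding t_def by (auto simp: field_simps)
  have "(1 - t) * f (1/2) + t * f c \<le> f ((1 - t) *\<^sub>R (1/2) + t *\<^sub>R c)"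
    using u c unfolding utility_def by (intro concave_onD t) auto
  also have "(1 - t) *\<^sub>R (1/2) + t *\<^sub>R c = 1/2 + (t * (2 * c - 1)) / (2::real)"
    by (simp add: field_simps)
  also have "\<dots> = 1" using tt by simp
  finally have "(2 * c - 1) * ((1 - t) * f (1/2) + t * f c) \<le> (2 * c - 1) * f 1"
    using c by (intro mult_left_mono) auto
  moreover have "(2 * c - 1) * ((1 - t) * f (1/2) + t * f c)
      = ((2 * c - 1) - t * (2 * c - 1)) * f (1/2) + (t * (2 * c - 1)) * f c"
    by (simp add: algebra_simps)
  ultimately show ?thesis unfolding tt by simp
qed

lemma utility_chord_bound_ennreal:
  assumes u: "utility f" and c: "1 < c"
  shows "ennreal (f c) \<le> ennreal (2 * c - 1) * ennreal (f 1) + ennreal (2 * c - 2) * ennreal (- f (1/2))"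
proof -
  have "f c \<le> (2 * c - 1) * f 1 - (2 * c - 2) * f (1/2)"
    by (rule utility_chord_bound[OF u c])
  also have "\<dots> \<le> (2 * c - 1) * max (f 1) 0 + (2 * c - 2) * max (- f (1/2)) 0"
  proof -
    have "(2 * c - 1) * f 1 \<le> (2 * c - 1) * max (f 1) 0"
      "(2 * c - 2) * (- f (1/2)) \<le> (2 * c - 2) * max (- f (1/2)) 0"
      using c by (intro mult_left_mono; simp)+
    then show ?thesis by (simp add: algebra_simps)
  qed
  finally have "ennreal (f c) \<le> ennreal ((2 * c - 1) * max (f 1) 0 + (2 * c - 2) * max (- f (1/2)) 0)"
    by (rule ennreal_leI)
  also have "\<dots> = ennreal (2 * c - 1) * ennreal (f 1) + ennreal (2 * c - 2) * ennreal (- f (1/2))"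
    using c by (simp add: ennreal_plus ennreal_mult ennreal_max_0 del: ennreal_plus[symmetric])
  finally show ?thesis .
qed

lemma utility_tangent_bound:
  assumes u: "utility f" and c: "0 < c" "c < d"
  shows "deriv f d * (d - c) \<le> f d - f c"
proof -
  have cv: "convex_on {0<..} (\<lambda>x. - f x)" using u unfolding utility_def convex_on_iff_concave by simp
  have d: "0 < d" using c by auto
  have "(f has_field_derivative deriv f d) (at d)" using utility_has_deriv[OF u d] .
  then have "((\<lambda>x. - f x) has_field_derivative - deriv f d) (at d)" by (rule DERIV_minus)
  then have D: "((\<lambda>x. - f x) has_field_derivative - deriv f d) (at d within {0<..})"
    by (rule has_field_derivative_at_within)
  have conn: "connected {0::real<..}" by (simp add: convex_connected)
  have i: "d \<in> interior {0::real<..}" using d by (simp add: interior_open)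
  have cc: "c \<in> {0::real<..}" using c by simp
  have "- f c - - f d \<ge> - deriv f d * (c - d)"
    by (rule convex_on_imp_above_tangent[OF cv conn i cc D])
  then show ?thesis by (simp add: algebra_simps)
qed

lemma measurable_deriv_utility:
  assumes u: "\<And>\<omega>. \<omega> \<in> space M \<Longrightarrow> utility (U \<omega>)"
    and m: "\<And>c. 0 < c \<Longrightarrow> (\<lambda>\<omega>. U \<omega> c) \<in> borel_measurable M"
    and d: "0 < d"
  shows "(\<lambda>\<omega>. deriv (U \<omega>) d) \<in> borel_measurable M"
proof (rule borel_measurable_LIMSEQ_real)
  define s where "s n = d + inverse (real (Suc n))" for n
  have "0 < s n" for n unfolding s_def using d by (auto intro: add_pos_pos)
  then show "(\<lambda>\<omega>. (U \<omega> (s n) - U \<omega> d) / (s n - d)) \<in> borel_measurable M" for n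
    using m[of "s n"] m[OF d] by measurable
  fix \<omega> assume "\<omega> \<in> space M"
  then have "((\<lambda>y. (U \<omega> y - U \<omega> d) / (y - d)) \<longlongrightarrow> deriv (U \<omega>) d) (at d)"
    using utility_has_deriv[OF u d] unfolding has_field_derivative_iff by blast
  moreover have "filterlim s (at d) sequentially"
    unfolding filterlim_at s_def
    using tendsto_add[OF tendsto_const LIMSEQ_inverse_real_of_nat, of d] by auto
  ultimately show "(\<lambda>n. (U \<omega> (s n) - U \<omega> d) / (s n - d)) \<longlonglongrightarrow> deriv (U \<omega>) d"
    by (rule filterlim_compose)
qed

lemma utility_family_Uext_const:
  assumes M: "prob_space M" and u: "utility u"
  shows "utility_family M (\<lambda>\<omega> c. Uext u c)"
proof -
  interpret prob_space M by (rule M)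
  show ?thesis
    by unfold_locales
      (simp_all add: Uext_strict_mono[OF u] Uext_isCont[OF u] Uext_0[OF u], simp_all add: Uext_pos)
qed

lemma utility_family_Uext:
  assumes M: "prob_space M" and u: "\<And>\<omega>. \<omega> \<in> space M \<Longrightarrow> utility (U \<omega>)"
    and m: "\<And>c. 0 < c \<Longrightarrow> (\<lambda>\<omega>. U \<omega> c) \<in> borel_measurable M"
    and i: "\<And>c. 0 < c \<Longrightarrow> integrable M (\<lambda>\<omega>. U \<omega> c)"
  shows "utility_family M (\<lambda>\<omega> c. Uext (U \<omega>) c)"
proof -
  interpret prob_space M by (rule M)
  show ?thesis
    by unfold_locales
      (simp_all add: Uext_strict_mono[OF u] Uext_isCont[OF u] Uext_0[OF u], simp_all add: Uext_pos i, auto intro!: borel_measurable_ereal m)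
qed

lemma (in prob_space) jensen_concave_pos:
  fixes g :: "'a \<Rightarrow> real"
  assumes q: "concave_on {0<..} q" and g: "integrable M g" "AE \<omega> in M. 0 < g \<omega>"
    and qg: "integrable M (\<lambda>\<omega>. q (g \<omega>))"
  shows "expectation (\<lambda>\<omega>. q (g \<omega>)) \<le> q (expectation g)"
proof -
  have "convex_on {0<..} (\<lambda>x. - q x)" using q unfolding convex_on_iff_concave by simp
  then have "(\<lambda>x. - q x) (expectation g) \<le> expectation (\<lambda>\<omega>. (\<lambda>x. - q x) (g \<omega>))"
    using jensens_inequality[where X=g and I="{0<..}" and a=0 and q="\<lambda>x. - q x"] g qg by auto
  then show ?thesis by simp
qed

lemma concave_on_real_of_Uext:
  assumes "utility u"
  shows "concave_on {0<..} (\<lambda>x. real_of_ereal (Uext u x))"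
proof -
  have "concave_on {0<..} u" using assms by (simp add: utility_def)
  moreover have "real_of_ereal (Uext u x) = u x" if "x \<in> {0<..}" for x
    using that by (simp add: Uext_pos)
  moreover have "convex {0::real<..}" by simp
  ultimately show ?thesis
    unfolding concave_on_def convex_on_def convex_def by (metis (no_types, lifting))
qed

locale qs_setting =
  fixes X :: "nat \<Rightarrow> 'a topology"
    and T :: nat
    and Qr :: "nat \<Rightarrow> (nat \<Rightarrow> 'a) \<Rightarrow> 'a measure set"
    and G :: "(nat \<Rightarrow> 'a) \<Rightarrow> ennreal"
  assumes Polish: "\<forall>t\<in>{1..T}. Polish_space (X t)"
    and QT_ne: "QT X Qr T \<noteq> {}"
    and G_meas: "G \<in> borel_measurable (univ_space (Om X T))"
    and G_fin: "qs (Om X T) (QT X Qr T) (\<lambda>\<omega>. G \<omega> < \<infinity>)"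
begin

lemma QT_probs: "P \<in> QT X Qr T \<Longrightarrow> P \<in> probs (Om X T)"
  by (rule QT_in_probs[OF Polish])

lemma prob_space_QT: "P \<in> QT X Qr T \<Longrightarrow> prob_space (completion P)"
  using probsD(4)[OF QT_probs] .

lemma space_QT: "P \<in> QT X Qr T \<Longrightarrow> space (completion P) = topspace (Om X T)"
  using probsD(5)[OF QT_probs] .

lemma measurable_QT:
  "P \<in> QT X Qr T \<Longrightarrow> f \<in> borel_measurable (univ_space (Om X T)) \<Longrightarrow> f \<in> borel_measurable (completion P)"
  by (rule measurable_completion_of_univ[OF QT_probs])

lemma measurable_enn2real_G: "P \<in> QT X Qr T \<Longrightarrow> (\<lambda>\<omega>. enn2real (G \<omega>)) \<in> borel_measurable (completion P)"
  using measurable_QT[OF _ G_meas] by measurable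

lemma AE_G_finite: "P \<in> QT X Qr T \<Longrightarrow> AE \<omega> in completion P. G \<omega> < \<infinity>"
  by (rule qs_imp_AE[OF G_fin _ QT_probs])

lemma Epos_G_eq_integral:
  assumes P: "P \<in> QT X Qr T" and fin: "Epos P G < \<infinity>"
  shows "integrable (completion P) (\<lambda>\<omega>. enn2real (G \<omega>))"
    and "Epos P G = ennreal (\<integral>\<omega>. enn2real (G \<omega>) \<partial>completion P)"
proof -
  have eq: "(\<integral>\<^sup>+\<omega>. ennreal (enn2real (G \<omega>)) \<partial>completion P) = Epos P G"
    unfolding Epos_def
    by (rule nn_integral_cong_AE) (use AE_G_finite[OF P] in \<open>auto simp: ennreal_enn2real less_top\<close>)
  then show int: "integrable (completion P) (\<lambda>\<omega>. enn2real (G \<omega>))"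
    unfolding integrable_iff_bounded using measurable_enn2real_G[OF P] fin by auto
  show "Epos P G = ennreal (\<integral>\<omega>. enn2real (G \<omega>) \<partial>completion P)"
    using nn_integral_eq_integral[OF int] eq by auto
qed

lemma AE_le_qs_norm:
  assumes P: "P \<in> QT X Qr T"
  shows "AE \<omega> in completion P. G \<omega> \<le> qs_norm (Om X T) (QT X Qr T) G"
proof -
  define S where "S = {M. qs (Om X T) (QT X Qr T) (\<lambda>\<omega>. G \<omega> \<le> M)}"
  have "qs_norm (Om X T) (QT X Qr T) G = Inf S" unfolding S_def qs_norm_def ..
  moreover have "\<exists>M\<in>S. M < Inf S + ennreal (1 / Suc n)" if "Inf S < \<top>" for n
  proof -
    have "Inf S < Inf S + ennreal (1 / Suc n)"
      using that by (cases "Inf S" rule: ennreal_cases) (auto simp: ennreal_plus[symmetric] ennreal_less_iff simp del: ennreal_plus)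
    then show ?thesis unfolding Inf_less_iff by blast
  qed
  then obtain Mn where Mn: "\<And>n. Inf S < \<top> \<Longrightarrow> Mn n \<in> S \<and> Mn n < Inf S + ennreal (1 / Suc n)"
    by metis
  show ?thesis
  proof (cases "Inf S < \<top>")
    case fin: True
    have "AE \<omega> in completion P. G \<omega> \<le> Mn n" for n
      using qs_imp_AE[OF _ P QT_probs[OF P]] Mn[OF fin] unfolding S_def by auto
    then have "AE \<omega> in completion P. \<forall>n. G \<omega> \<le> Mn n" by (simp add: AE_all_countable)
    then show ?thesis
    proof eventually_elim
      fix \<omega> assume bound: "\<forall>n. G \<omega> \<le> Mn n"
      show "G \<omega> \<le> qs_norm (Om X T) (QT X Qr T) G" unfolding \<open>_ = Inf S\<close>
      proof (rule ennreal_le_epsilon)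
        fix e :: real assume "0 < e"
        then obtain n where n: "1 / real (Suc n) < e" using nat_approx_posE by blast
        have "G \<omega> \<le> Inf S + ennreal (1 / Suc n)" using bound Mn[OF fin, of n] by (metis order.trans less_imp_le)
        also have "\<dots> \<le> Inf S + ennreal e" using n by (intro add_left_mono ennreal_leI) auto
        finally show "G \<omega> \<le> Inf S + ennreal e" .
      qed
    qed
  next
    case False
    then have top: "Inf S = \<top>" using less_top by blast
    show ?thesis unfolding \<open>_ = Inf S\<close> top by simp
  qed
qed

lemma qs_norm_finite:
  "qs (Om X T) (QT X Qr T) (\<lambda>\<omega>. G \<omega> \<le> ennreal M) \<Longrightarrow> qs_norm (Om X T) (QT X Qr T) G < \<infinity>"
  unfolding qs_norm_def by (rule le_less_trans[OF Inf_lower]) auto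

end

locale deterministic_utility = qs_setting +
  fixes u :: "real \<Rightarrow> real"
  assumes u: "utility u"
    and u_domain: "{x. Uext u x > -\<infinity>} = {0<..}"
    and u_G_pos: "\<forall>P\<in>QT X Qr T. Epos P (\<lambda>\<omega>. e2ennreal (Uext u (enn2real (G \<omega>)))) < \<infinity>"
    and u_G_neg: "(SUP P\<in>QT X Qr T. Epos P (\<lambda>\<omega>. e2ennreal (- Uext u (enn2real (G \<omega>))))) < \<infinity>"
begin

definition EuG :: "(nat \<Rightarrow> 'a) measure \<Rightarrow> ereal" where
  "EuG P = Eexp P (\<lambda>\<omega>. Uext u (enn2real (G \<omega>)))"

definition ce :: "(nat \<Rightarrow> 'a) measure \<Rightarrow> real" where
  "ce P = (THE c. 0 \<le> c \<and> Uext u c = EuG P)"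

definition ce_robust :: real where
  "ce_robust = (THE c. 0 \<le> c \<and> Uext u c = (INF P\<in>QT X Qr T. EuG P))"

lemma Uext_u_0: "Uext u 0 = -\<infinity>"
  using u_domain by auto

lemma u_G_neg_finite: "P \<in> QT X Qr T \<Longrightarrow> Epos P (\<lambda>\<omega>. e2ennreal (- Uext u (enn2real (G \<omega>)))) < \<infinity>"
  using u_G_neg by (meson SUP_upper le_less_trans)

lemma utility_family_QT: "P \<in> QT X Qr T \<Longrightarrow> utility_family (completion P) (\<lambda>\<omega> c. Uext u c)"
  by (rule utility_family_Uext_const[OF prob_space_QT u])

lemma integrable_u_G:
  assumes P: "P \<in> QT X Qr T"
  shows "AE \<omega> in completion P. Uext u (enn2real (G \<omega>)) = ereal (real_of_ereal (Uext u (enn2real (G \<omega>))))"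
    and "integrable (completion P) (\<lambda>\<omega>. real_of_ereal (Uext u (enn2real (G \<omega>))))"
    and "EuG P = ereal (\<integral>\<omega>. real_of_ereal (Uext u (enn2real (G \<omega>))) \<partial>completion P)"
  using integrable_real_of_ereal[OF
      utility_family.measurable_V_comp[OF utility_family_QT[OF P] measurable_enn2real_G[OF P]]]
    u_G_pos P u_G_neg_finite[OF P]
  by (auto simp: Epos_def EuG_def Eexp_eq_ereal_expectation)

lemma ex1_ce: "P \<in> QT X Qr T \<Longrightarrow> \<exists>!c. 0 \<le> c \<and> Uext u c = EuG P"
  using utility_family.ex1_certainty_equivalent[OF utility_family_QT measurable_enn2real_G, of P]
    u_G_pos u_G_neg_finite[of P] ereal_expectation_const[OF prob_space_QT, of P]
  by (simp add: utility_family.EV_def[OF utility_family_QT] EuG_def Eexp_eq_ereal_expectation Epos_def)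

lemma ce: "P \<in> QT X Qr T \<Longrightarrow> 0 \<le> ce P \<and> Uext u (ce P) = EuG P"
  unfolding ce_def by (rule theI'[OF ex1_ce])

lemma ex1_ce_robust: "\<exists>!c. 0 \<le> c \<and> Uext u c = (INF P\<in>QT X Qr T. EuG P)"
proof -
  obtain P where P: "P \<in> QT X Qr T" using QT_ne by auto
  show ?thesis
  proof (rule ex1_Uext_eq[OF u _ _ conjunct1[OF ce[OF P]]])
    show "Uext u 0 \<le> (INF P\<in>QT X Qr T. EuG P)" by (simp add: Uext_u_0)
    show "(INF P\<in>QT X Qr T. EuG P) \<le> Uext u (ce P)"
      using ce[OF P] by (auto intro: INF_lower[OF P])
  qed
qed

lemma ce_robust: "0 \<le> ce_robust \<and> Uext u ce_robust = (INF P\<in>QT X Qr T. EuG P)"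
  unfolding ce_robust_def by (rule theI'[OF ex1_ce_robust])

lemma ce_robust_eq_INF: "ce_robust = (INF P\<in>QT X Qr T. ce P)"
proof -
  have bdd: "bdd_below (ce ` QT X Qr T)" using ce by (auto intro!: bdd_belowI[of _ 0])
  have le: "ce_robust \<le> ce P" if "P \<in> QT X Qr T" for P
    using ce_robust ce[OF that] INF_lower[OF that, of EuG] Uext_le_iff[OF u] by metis
  have "Uext u (INF P\<in>QT X Qr T. ce P) \<le> (INF P\<in>QT X Qr T. EuG P)"
  proof (rule INF_greatest)
    fix P assume P: "P \<in> QT X Qr T"
    have "0 \<le> (INF P\<in>QT X Qr T. ce P)" using QT_ne ce by (auto intro: cINF_greatest)
    then have "Uext u (INF P\<in>QT X Qr T. ce P) \<le> Uext u (ce P)"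
      by (intro Uext_mono[OF u] cINF_lower[OF bdd P])
    then show "Uext u (INF P\<in>QT X Qr T. ce P) \<le> EuG P" using ce[OF P] by simp
  qed
  moreover have "0 \<le> (INF P\<in>QT X Qr T. ce P)" using QT_ne ce by (auto intro: cINF_greatest)
  ultimately have "(INF P\<in>QT X Qr T. ce P) \<le> ce_robust"
    using ce_robust Uext_le_iff[OF u] by metis
  then show ?thesis using le QT_ne by (intro antisym cINF_greatest) auto
qed

lemma ce_le_Epos_G:
  assumes P: "P \<in> QT X Qr T"
  shows "ennreal (ce P) \<le> Epos P G"
proof (cases "Epos P G < \<infinity>")
  case True
  interpret prob_space "completion P" by (rule prob_space_QT[OF P])
  define g where "g \<omega> = enn2real (G \<omega>)" for \<omega>
  note g = Epos_G_eq_integral[OF P True, folded g_def]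
  note uG = integrable_u_G[OF P, folded g_def]
  have g_pos: "AE \<omega> in completion P. 0 < g \<omega>"
    using uG(1)
  proof eventually_elim
    fix \<omega> assume "Uext u (g \<omega>) = ereal (real_of_ereal (Uext u (g \<omega>)))"
    moreover have "0 \<le> g \<omega>" by (simp add: g_def)
    ultimately show "0 < g \<omega>" using Uext_u_0 by (cases "g \<omega> = 0") auto
  qed
  have E_pos: "0 < expectation g" by (rule expectation_greater[OF g(1) g_pos])
  have "expectation (\<lambda>\<omega>. real_of_ereal (Uext u (g \<omega>))) \<le> real_of_ereal (Uext u (expectation g))"
    by (rule jensen_concave_pos[OF concave_on_real_of_Uext[OF u] g(1) g_pos uG(2)])
  then have "Uext u (ce P) \<le> Uext u (expectation g)"
    using ce[OF P] uG(3) E_pos by (simp add: Uext_pos)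
  then have "ce P \<le> expectation g"
    using ce[OF P] E_pos Uext_le_iff[OF u, of "ce P" "expectation g"] by simp
  then show ?thesis using g(2) by (simp add: ennreal_leI)
next
  case False
  then show ?thesis by (simp add: top_unique less_top[symmetric])
qed

lemma ce_robust_le_ce: "P \<in> QT X Qr T \<Longrightarrow> ce_robust \<le> ce P"
  unfolding ce_robust_eq_INF using ce by (auto intro!: cINF_lower bdd_belowI[of _ 0])

lemma risk_premium_nonneg: "P \<in> QT X Qr T \<Longrightarrow> 0 \<le> enn2ereal (Epos P G) - ereal (ce P)"
  using ce_le_Epos_G[of P] ce[of P]
  by (cases "enn2ereal (Epos P G)") (auto simp: less_eq_ennreal.rep_eq enn2ereal_ennreal)

lemma certainty_equivalents:
  "(\<forall>P\<in>QT X Qr T. \<exists>!c::real. 0 \<le> c \<and> Uext u c = Eexp P (\<lambda>\<omega>. Uext u (enn2real (G \<omega>))))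
     \<and> (\<exists>!c::real. 0 \<le> c \<and> Uext u c = (INF P\<in>QT X Qr T. Eexp P (\<lambda>\<omega>. Uext u (enn2real (G \<omega>)))))
     \<and> (let eP = (\<lambda>P. THE c::real. 0 \<le> c \<and> Uext u c = Eexp P (\<lambda>\<omega>. Uext u (enn2real (G \<omega>))));
           eG = (THE c::real. 0 \<le> c \<and>
                   Uext u c = (INF P\<in>QT X Qr T. Eexp P (\<lambda>\<omega>. Uext u (enn2real (G \<omega>)))));
           rho = (\<lambda>P. enn2ereal (Epos P G) - ereal (eP P));
           rhoG = (SUP P\<in>QT X Qr T. rho P)
       in (\<forall>P\<in>QT X Qr T. ennreal (eP P) \<le> Epos P G)
          \<and> eG = (INF P\<in>QT X Qr T. eP P)
          \<and> ennreal eG \<le> (INF P\<in>QT X Qr T. Epos P G)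
          \<and> 0 \<le> rhoG
          \<and> rhoG \<le> (SUP P\<in>QT X Qr T. enn2ereal (Epos P G)) - ereal eG)"
proof -
  obtain P0 where P0: "P0 \<in> QT X Qr T" using QT_ne by auto
  have "ennreal ce_robust \<le> (INF P\<in>QT X Qr T. Epos P G)"
  proof (rule INF_greatest)
    fix P assume P: "P \<in> QT X Qr T"
    have "ennreal ce_robust \<le> ennreal (ce P)" by (rule ennreal_leI[OF ce_robust_le_ce[OF P]])
    also have "\<dots> \<le> Epos P G" by (rule ce_le_Epos_G[OF P])
    finally show "ennreal ce_robust \<le> Epos P G" .
  qed
  moreover have "0 \<le> (SUP P\<in>QT X Qr T. enn2ereal (Epos P G) - ereal (ce P))"
    using risk_premium_nonneg[OF P0] by (rule order.trans) (rule SUP_upper[OF P0])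
  moreover have "(SUP P\<in>QT X Qr T. enn2ereal (Epos P G) - ereal (ce P))
      \<le> (SUP P\<in>QT X Qr T. enn2ereal (Epos P G)) - ereal ce_robust"
    by (rule SUP_least, rule ereal_minus_mono) (auto intro: SUP_upper ce_robust_le_ce)
  ultimately show ?thesis
    unfolding Let_def EuG_def[symmetric] ce_def[symmetric] ce_robust_def[symmetric]
    using ex1_ce ex1_ce_robust ce_le_Epos_G ce_robust_eq_INF by (intro conjI ballI) simp_all
qed

end
locale random_utility_setting = qs_setting +
  fixes U :: "(nat \<Rightarrow> 'a) \<Rightarrow> real \<Rightarrow> real"
  assumes U: "random_utility X T U"
    and U_neg: "\<forall>y>0. (SUP P\<in>QT X Qr T. Epos P (\<lambda>\<omega>. ennreal (- U \<omega> y))) < \<infinity>"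
    and U_1_pos: "\<forall>P\<in>QT X Qr T. Epos P (\<lambda>\<omega>. ennreal (U \<omega> 1)) < \<infinity>"
    and U_G: "\<forall>P\<in>QT X Qr T. Epos P (\<lambda>\<omega>. e2ennreal \<bar>Uext (U \<omega>) (enn2real (G \<omega>))\<bar>) < \<infinity>"
begin

definition EU :: "(nat \<Rightarrow> 'a) measure \<Rightarrow> real \<Rightarrow> ereal" where
  "EU P c = Eexp P (\<lambda>\<omega>. Uext (U \<omega>) c)"

definition EUG :: "(nat \<Rightarrow> 'a) measure \<Rightarrow> ereal" where
  "EUG P = Eexp P (\<lambda>\<omega>. Uext (U \<omega>) (enn2real (G \<omega>)))"

lemma utility_U: "P \<in> QT X Qr T \<Longrightarrow> \<omega> \<in> space (completion P) \<Longrightarrow> utility (U \<omega>)"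
  using U space_QT unfolding random_utility_def by auto

lemma measurable_U: "P \<in> QT X Qr T \<Longrightarrow> 0 < c \<Longrightarrow> (\<lambda>\<omega>. U \<omega> c) \<in> borel_measurable (completion P)"
  using U measurable_QT unfolding random_utility_def by auto

lemma U_neg_finite:
  assumes P: "P \<in> QT X Qr T" and c: "0 < c"
  shows "(\<integral>\<^sup>+\<omega>. ennreal (- U \<omega> c) \<partial>completion P) < \<infinity>"
proof -
  have "Epos P (\<lambda>\<omega>. ennreal (- U \<omega> c)) \<le> (SUP P\<in>QT X Qr T. Epos P (\<lambda>\<omega>. ennreal (- U \<omega> c)))"
    by (rule SUP_upper[OF P])
  also have "\<dots> < \<infinity>" using U_neg c by auto
  finally show ?thesis unfolding Epos_def .
qed

text \<open>Concavity bounds \<open>U(c)\<close> for \<open>c > 1\<close> by the chord through \<open>U(1/2)\<close> and \<open>U(1)\<close>.\<close>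

lemma U_pos_finite:
  assumes P: "P \<in> QT X Qr T" and c: "0 < c"
  shows "(\<integral>\<^sup>+\<omega>. ennreal (U \<omega> c) \<partial>completion P) < \<infinity>"
proof (cases "c \<le> 1")
  case True
  have "(\<integral>\<^sup>+\<omega>. ennreal (U \<omega> c) \<partial>completion P) \<le> (\<integral>\<^sup>+\<omega>. ennreal (U \<omega> 1) \<partial>completion P)"
    by (rule nn_integral_mono) (use True c in \<open>auto intro!: ennreal_leI utility_le[OF utility_U[OF P]]\<close>)
  then show ?thesis using U_1_pos P unfolding Epos_def by (simp add: le_less_trans)
next
  case False
  have "(\<integral>\<^sup>+\<omega>. ennreal (U \<omega> c) \<partial>completion P)
      \<le> (\<integral>\<^sup>+\<omega>. ennreal (2 * c - 1) * ennreal (U \<omega> 1) + ennreal (2 * c - 2) * ennreal (- U \<omega> (1/2)) \<partial>completion P)"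
    using False by (intro nn_integral_mono utility_chord_bound_ennreal utility_U[OF P]) auto
  also have "\<dots> = ennreal (2 * c - 1) * (\<integral>\<^sup>+\<omega>. ennreal (U \<omega> 1) \<partial>completion P)
      + ennreal (2 * c - 2) * (\<integral>\<^sup>+\<omega>. ennreal (- U \<omega> (1/2)) \<partial>completion P)"
    using measurable_U[OF P, of 1] measurable_U[OF P, of "1/2"]
    by (subst nn_integral_add) (auto simp: nn_integral_cmult)
  also have "\<dots> < \<infinity>"
    using U_1_pos P U_neg_finite[OF P, of "1/2"]
    by (simp add: ennreal_mult_less_top less_top Epos_def)
  finally show ?thesis .
qed

lemma integrable_U:
  assumes P: "P \<in> QT X Qr T" and c: "0 < c"
  shows "integrable (completion P) (\<lambda>\<omega>. U \<omega> c)"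
proof -
  have "(\<integral>\<^sup>+\<omega>. ennreal (norm (U \<omega> c)) \<partial>completion P)
      = (\<integral>\<^sup>+\<omega>. ennreal (U \<omega> c) + ennreal (- U \<omega> c) \<partial>completion P)"
    by (rule nn_integral_cong) (auto simp: ennreal_neg abs_real_def)
  also have "\<dots> = (\<integral>\<^sup>+\<omega>. ennreal (U \<omega> c) \<partial>completion P) + (\<integral>\<^sup>+\<omega>. ennreal (- U \<omega> c) \<partial>completion P)"
    using measurable_U[OF P c] by (subst nn_integral_add) auto
  also have "\<dots> < \<infinity>" using U_pos_finite[OF P c] U_neg_finite[OF P c] by (simp add: less_top)
  finally show ?thesis unfolding integrable_iff_bounded using measurable_U[OF P c] by auto
qed

lemma utility_family_QT: "P \<in> QT X Qr T \<Longrightarrow> utility_family (completion P) (\<lambda>\<omega> c. Uext (U \<omega>) c)"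
  by (rule utility_family_Uext[OF prob_space_QT utility_U measurable_U integrable_U])

lemma EU_eq_EV: "P \<in> QT X Qr T \<Longrightarrow> EU P c = utility_family.EV (completion P) (\<lambda>\<omega> c. Uext (U \<omega>) c) c"
  by (simp add: EU_def Eexp_eq_ereal_expectation utility_family.EV_def[OF utility_family_QT])

lemma U_G_parts_finite:
  assumes P: "P \<in> QT X Qr T"
  shows "(\<integral>\<^sup>+\<omega>. e2ennreal (Uext (U \<omega>) (enn2real (G \<omega>))) \<partial>completion P) < \<infinity>"
    and "(\<integral>\<^sup>+\<omega>. e2ennreal (- Uext (U \<omega>) (enn2real (G \<omega>))) \<partial>completion P) < \<infinity>"
proof -
  have abs_bound: "(\<integral>\<^sup>+\<omega>. e2ennreal \<bar>Uext (U \<omega>) (enn2real (G \<omega>))\<bar> \<partial>completion P) < \<infinity>"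
    using U_G P unfolding Epos_def by auto
  have abs_ge: "x \<le> \<bar>x\<bar>" "- x \<le> \<bar>x\<bar>" for x :: ereal by (cases x; simp)+
  show "(\<integral>\<^sup>+\<omega>. e2ennreal (Uext (U \<omega>) (enn2real (G \<omega>))) \<partial>completion P) < \<infinity>"
    by (rule le_less_trans[OF _ abs_bound], rule nn_integral_mono) (auto intro!: e2ennreal_mono abs_ge)
  show "(\<integral>\<^sup>+\<omega>. e2ennreal (- Uext (U \<omega>) (enn2real (G \<omega>))) \<partial>completion P) < \<infinity>"
    by (rule le_less_trans[OF _ abs_bound], rule nn_integral_mono) (auto intro!: e2ennreal_mono abs_ge)
qed

lemma ex1_ce: "P \<in> QT X Qr T \<Longrightarrow> \<exists>!c. 0 \<le> c \<and> EU P c = EUG P"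
  using utility_family.ex1_certainty_equivalent[OF utility_family_QT measurable_enn2real_G _
      U_G_parts_finite]
  by (simp add: EU_eq_EV EUG_def Eexp_eq_ereal_expectation)

lemma EU_eq_integral: "P \<in> QT X Qr T \<Longrightarrow> 0 < c \<Longrightarrow> EU P c = ereal (\<integral>\<omega>. U \<omega> c \<partial>completion P)"
  by (simp add: EU_def Eexp_eq_ereal_expectation Uext_pos ereal_expectation_real integrable_U)

lemma EU_mono: "P \<in> QT X Qr T \<Longrightarrow> 0 \<le> x \<Longrightarrow> x \<le> y \<Longrightarrow> EU P x \<le> EU P y"
  unfolding EU_eq_EV by (rule utility_family.EV_mono[OF utility_family_QT])

lemma EU_0_eq_INF: "P \<in> QT X Qr T \<Longrightarrow> EU P 0 = (INF n. EU P (1 / Suc n))"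
  unfolding EU_eq_EV by (rule utility_family.EV_0_eq_INF[OF utility_family_QT])

lemma EU_0_le_EUG: "P \<in> QT X Qr T \<Longrightarrow> EU P 0 \<le> EUG P"
  unfolding EU_def EUG_def Eexp_eq_ereal_expectation
  by (rule ereal_expectation_mono) (auto intro!: Uext_mono utility_U)

lemma EUG_finite: "P \<in> QT X Qr T \<Longrightarrow> \<bar>EUG P\<bar> \<noteq> \<infinity>"
  using ereal_expectation_eq_integral[OF
      utility_family.measurable_V_comp[OF utility_family_QT measurable_enn2real_G] U_G_parts_finite]
  by (simp add: EUG_def Eexp_eq_ereal_expectation)

text \<open>The tangent inequality of concavity, \<open>U(d) - U(c) \<ge> U'(d) (d - c)\<close>, in expectation.\<close>

lemma integral_U_increment:
  assumes P: "P \<in> QT X Qr T" and cd: "0 < c" "c < d"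
  shows "ennreal (d - c) * Epos P (\<lambda>\<omega>. ennreal (deriv (U \<omega>) d))
    \<le> ennreal ((\<integral>\<omega>. U \<omega> d \<partial>completion P) - (\<integral>\<omega>. U \<omega> c \<partial>completion P))"
proof -
  have d: "0 < d" using cd by auto
  have "ennreal (d - c) * Epos P (\<lambda>\<omega>. ennreal (deriv (U \<omega>) d))
      = (\<integral>\<^sup>+\<omega>. ennreal (d - c) * ennreal (deriv (U \<omega>) d) \<partial>completion P)"
    unfolding Epos_def
    using measurable_deriv_utility[OF utility_U[OF P] measurable_U[OF P] d]
    by (intro nn_integral_cmult[symmetric]) measurable
  also have "\<dots> \<le> (\<integral>\<^sup>+\<omega>. ennreal (U \<omega> d - U \<omega> c) \<partial>completion P)"
  proof (rule nn_integral_mono)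
    fix \<omega> assume "\<omega> \<in> space (completion P)"
    then have "deriv (U \<omega>) d * (d - c) \<le> U \<omega> d - U \<omega> c"
      by (rule utility_tangent_bound[OF utility_U[OF P] cd])
    then show "ennreal (d - c) * ennreal (deriv (U \<omega>) d) \<le> ennreal (U \<omega> d - U \<omega> c)"
      using cd by (simp add: ennreal_mult'[symmetric] mult.commute ennreal_leI)
  qed
  also have "\<dots> = ennreal (\<integral>\<omega>. U \<omega> d - U \<omega> c \<partial>completion P)"
  proof (intro nn_integral_eq_integral AE_I2)
    show "\<omega> \<in> space (completion P) \<Longrightarrow> 0 \<le> U \<omega> d - U \<omega> c" for \<omega>
      using utility_le[OF utility_U[OF P], of \<omega> c d] cd by simp
  qed (use integrable_U[OF P] cd in auto)
  finally show ?thesis using integrable_U[OF P] cd by simp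
qed

lemma ex1_certainty_equivalent:
  "\<forall>P\<in>QT X Qr T. \<exists>!c::real. 0 \<le> c \<and>
     Eexp P (\<lambda>\<omega>. Uext (U \<omega>) c) = Eexp P (\<lambda>\<omega>. Uext (U \<omega>) (enn2real (G \<omega>)))"
  using ex1_ce unfolding EU_def EUG_def by blast

end

locale robust_random_utility = random_utility_setting +
  assumes G_bounded: "\<exists>M::real. qs (Om X T) (QT X Qr T) (\<lambda>\<omega>. G \<omega> \<le> ennreal M)"
    and U_G_neg: "(SUP P\<in>QT X Qr T. Epos P (\<lambda>\<omega>. e2ennreal (- Uext (U \<omega>) (enn2real (G \<omega>))))) < \<infinity>"
    and marginal_utility: "\<forall>z>0. (INF P\<in>QT X Qr T. Epos P (\<lambda>\<omega>. ennreal (deriv (U \<omega>) z))) > 0"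
begin

definition \<phi> :: "real \<Rightarrow> ereal" where
  "\<phi> c = (INF P\<in>QT X Qr T. EU P c)"

definition \<phi>G :: ereal where
  "\<phi>G = (INF P\<in>QT X Qr T. EUG P)"

definition Gmax :: real where
  "Gmax = enn2real (qs_norm (Om X T) (QT X Qr T) G)"

definition ce :: "(nat \<Rightarrow> 'a) measure \<Rightarrow> real" where
  "ce P = (THE c. 0 \<le> c \<and> EU P c = EUG P)"

lemma qs_norm_eq_Gmax: "qs_norm (Om X T) (QT X Qr T) G = ennreal Gmax"
  using G_bounded qs_norm_finite unfolding Gmax_def by (auto simp: ennreal_enn2real less_top)

lemma EUG_le_EU_Gmax: "P \<in> QT X Qr T \<Longrightarrow> EUG P \<le> EU P Gmax"
  unfolding EUG_def EU_def Eexp_eq_ereal_expectation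
proof (rule ereal_expectation_mono_AE)
  assume P: "P \<in> QT X Qr T"
  show "AE \<omega> in completion P. Uext (U \<omega>) (enn2real (G \<omega>)) \<le> Uext (U \<omega>) Gmax"
    using AE_le_qs_norm[OF P] AE_space
  proof eventually_elim
    fix \<omega> assume "G \<omega> \<le> qs_norm (Om X T) (QT X Qr T) G" "\<omega> \<in> space (completion P)"
    then show "Uext (U \<omega>) (enn2real (G \<omega>)) \<le> Uext (U \<omega>) Gmax"
      using enn2real_mono[of "G \<omega>" "ennreal Gmax"] unfolding qs_norm_eq_Gmax
      by (intro Uext_mono utility_U[OF P]) (auto simp: Gmax_def)
  qed
qed

lemma \<phi>G_le_\<phi>_Gmax: "\<phi>G \<le> \<phi> Gmax"
  unfolding \<phi>G_def \<phi>_def by (rule INF_mono) (use EUG_le_EU_Gmax in blast)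

lemma \<phi>_0_le_\<phi>G: "\<phi> 0 \<le> \<phi>G"
  unfolding \<phi>G_def \<phi>_def by (rule INF_mono) (use EU_0_le_EUG in blast)

lemma \<phi>_mono: "0 \<le> x \<Longrightarrow> x \<le> y \<Longrightarrow> \<phi> x \<le> \<phi> y"
  unfolding \<phi>_def by (rule INF_mono) (use EU_mono in blast)

lemma \<phi>G_finite: "\<bar>\<phi>G\<bar> \<noteq> \<infinity>"
proof -
  define C where "C = (SUP P\<in>QT X Qr T. Epos P (\<lambda>\<omega>. e2ennreal (- Uext (U \<omega>) (enn2real (G \<omega>)))))"
  have "- enn2ereal C \<le> EUG P" if P: "P \<in> QT X Qr T" for P
  proof -
    have "Epos P (\<lambda>\<omega>. e2ennreal (- Uext (U \<omega>) (enn2real (G \<omega>)))) \<le> C"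
      unfolding C_def by (rule SUP_upper[OF P])
    then have "- enn2ereal C \<le> - enn2ereal (Epos P (\<lambda>\<omega>. e2ennreal (- Uext (U \<omega>) (enn2real (G \<omega>)))))"
      by (simp add: less_eq_ennreal.rep_eq)
    also have "\<dots> \<le> EUG P"
      unfolding EUG_def Eexp_eq_ereal_expectation Epos_def by (rule ereal_expectation_ge)
    finally show ?thesis .
  qed
  then have "- enn2ereal C \<le> \<phi>G" unfolding \<phi>G_def by (rule INF_greatest)
  moreover have "- enn2ereal C \<noteq> -\<infinity>"
    using U_G_neg unfolding C_def by (simp add: enn2ereal_eq_ereal_enn2real)
  moreover obtain P where "P \<in> QT X Qr T" using QT_ne by auto
  then have "\<phi>G \<le> EUG P" "\<bar>EUG P\<bar> \<noteq> \<infinity>"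
    unfolding \<phi>G_def using EUG_finite by (auto intro: INF_lower)
  ultimately show ?thesis by auto
qed

definition \<phi>r :: "real \<Rightarrow> real" where
  "\<phi>r c = (INF P\<in>QT X Qr T. \<integral>\<omega>. U \<omega> c \<partial>completion P)"

lemma integral_U_bounded_below:
  assumes c: "0 < c"
  shows "bdd_below ((\<lambda>P. \<integral>\<omega>. U \<omega> c \<partial>completion P) ` QT X Qr T)"
proof -
  define C where "C = (SUP P\<in>QT X Qr T. Epos P (\<lambda>\<omega>. ennreal (- U \<omega> c)))"
  have "- enn2real C \<le> (\<integral>\<omega>. U \<omega> c \<partial>completion P)" if P: "P \<in> QT X Qr T" for P
  proof -
    have "Epos P (\<lambda>\<omega>. ennreal (- U \<omega> c)) \<le> C" unfolding C_def by (rule SUP_upper[OF P])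
    then have "- enn2ereal C \<le> - enn2ereal (Epos P (\<lambda>\<omega>. ennreal (- U \<omega> c)))"
      by (simp add: less_eq_ennreal.rep_eq)
    also have "Epos P (\<lambda>\<omega>. ennreal (- U \<omega> c)) = Epos P (\<lambda>\<omega>. e2ennreal (- Uext (U \<omega>) c))"
      using c by (simp add: Epos_def Uext_pos e2ennreal_ereal)
    also have "- enn2ereal \<dots> \<le> EU P c"
      unfolding EU_def Eexp_eq_ereal_expectation Epos_def by (rule ereal_expectation_ge)
    finally show ?thesis
      using U_neg c EU_eq_integral[OF P c] by (simp add: C_def enn2ereal_eq_ereal_enn2real)
  qed
  then show ?thesis by (rule bdd_belowI2)
qed

lemma \<phi>_eq_\<phi>r:
  assumes c: "0 < c"
  shows "\<phi> c = ereal (\<phi>r c)"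
proof -
  have "\<phi> c = (INF P\<in>QT X Qr T. ereal (\<integral>\<omega>. U \<omega> c \<partial>completion P))"
    unfolding \<phi>_def using EU_eq_integral c by (intro INF_cong) auto
  also have "\<dots> = Inf (ereal ` (\<lambda>P. \<integral>\<omega>. U \<omega> c \<partial>completion P) ` QT X Qr T)"
    by (simp add: image_image)
  also have "\<dots> = ereal (\<phi>r c)"
    unfolding \<phi>r_def by (rule ereal_Inf'[symmetric]) (use integral_U_bounded_below[OF c] QT_ne in auto)
  finally show ?thesis .
qed

lemma concave_on_\<phi>r: "concave_on {0<..} \<phi>r"
proof (rule concave_on_linorderI)
  fix t x y :: real assume t: "0 < t" "t < 1" and x: "x \<in> {0<..}" and y: "y \<in> {0<..}"
  define z where "z = (1 - t) *\<^sub>R x + t *\<^sub>R y"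
  have z: "0 < z" unfolding z_def using t x y by (auto intro!: add_pos_pos)
  have "(1 - t) * \<phi>r x + t * \<phi>r y \<le> (\<integral>\<omega>. U \<omega> z \<partial>completion P)" if P: "P \<in> QT X Qr T" for P
  proof -
    have "(1 - t) * \<phi>r x + t * \<phi>r y
        \<le> (1 - t) * (\<integral>\<omega>. U \<omega> x \<partial>completion P) + t * (\<integral>\<omega>. U \<omega> y \<partial>completion P)"
      unfolding \<phi>r_def using t x y integral_U_bounded_below
      by (intro add_mono mult_left_mono cINF_lower P) auto
    also have "\<dots> = (\<integral>\<omega>. (1 - t) * U \<omega> x + t * U \<omega> y \<partial>completion P)"
      using integrable_U[OF P] x y by simp
    also have "\<dots> \<le> (\<integral>\<omega>. U \<omega> z \<partial>completion P)"
    proof (rule integral_mono)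
      fix \<omega> assume "\<omega> \<in> space (completion P)"
      then have "concave_on {0<..} (U \<omega>)" using utility_U[OF P] unfolding utility_def by auto
      then show "(1 - t) * U \<omega> x + t * U \<omega> y \<le> U \<omega> z"
        unfolding z_def by (rule concave_onD) (use t x y in auto)
    qed (use integrable_U[OF P] x y z in auto)
    finally show ?thesis .
  qed
  then show "(1 - t) * \<phi>r x + t * \<phi>r y \<le> \<phi>r ((1 - t) *\<^sub>R x + t *\<^sub>R y)"
    unfolding z_def[symmetric] \<phi>r_def[of z] using QT_ne by (intro cINF_greatest) auto
qed simp

lemma continuous_on_\<phi>r: "continuous_on {0<..} \<phi>r"
proof -
  have "convex_on {0<..} (\<lambda>x. - \<phi>r x)" using concave_on_\<phi>r unfolding convex_on_iff_concave by simp
  then have "continuous_on {0<..} (\<lambda>x. - (- \<phi>r x))"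
    by (intro continuous_on_minus convex_on_continuous) auto
  then show ?thesis by simp
qed

text \<open>This is where the positive expected marginal utility is used.\<close>

lemma EU_uniform_gap:
  assumes cd: "0 < c" "c < d"
  shows "\<exists>\<kappa>>0. \<forall>P\<in>QT X Qr T. EU P c + ereal \<kappa> \<le> EU P d"
proof -
  define \<delta> where "\<delta> = (INF P\<in>QT X Qr T. Epos P (\<lambda>\<omega>. ennreal (deriv (U \<omega>) d)))"
  define \<eta> where "\<eta> = enn2real (min \<delta> 1)"
  have "0 < \<delta>" using marginal_utility cd unfolding \<delta>_def by auto
  then have \<eta>: "0 < \<eta>" "ennreal \<eta> \<le> \<delta>"
    unfolding \<eta>_def by (auto simp: enn2real_positive_iff min_less_iff_disj ennreal_enn2real)
  have "EU P c + ereal ((d - c) * \<eta>) \<le> EU P d" if P: "P \<in> QT X Qr T" for P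
  proof -
    have "ennreal ((d - c) * \<eta>) = ennreal (d - c) * ennreal \<eta>"
      using cd \<eta> by (simp add: ennreal_mult)
    also have "\<dots> \<le> ennreal (d - c) * Epos P (\<lambda>\<omega>. ennreal (deriv (U \<omega>) d))"
      using \<eta>(2) INF_lower[OF P, of "\<lambda>P. Epos P (\<lambda>\<omega>. ennreal (deriv (U \<omega>) d))"]
      unfolding \<delta>_def by (intro mult_left_mono) auto
    also have "\<dots> \<le> ennreal ((\<integral>\<omega>. U \<omega> d \<partial>completion P) - (\<integral>\<omega>. U \<omega> c \<partial>completion P))"
      by (rule integral_U_increment[OF P cd])
    finally have "ennreal ((d - c) * \<eta>)
        \<le> ennreal ((\<integral>\<omega>. U \<omega> d \<partial>completion P) - (\<integral>\<omega>. U \<omega> c \<partial>completion P))" .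
    moreover have "0 < (d - c) * \<eta>" using cd \<eta> by simp
    ultimately have "(d - c) * \<eta> \<le> (\<integral>\<omega>. U \<omega> d \<partial>completion P) - (\<integral>\<omega>. U \<omega> c \<partial>completion P)"
      by (auto simp: ennreal_le_iff2)
    then show ?thesis using EU_eq_integral[OF P] cd by simp
  qed
  then show ?thesis using cd \<eta> by (intro exI[of _ "(d - c) * \<eta>"]) auto
qed

lemma \<phi>_strict_mono:
  assumes "0 \<le> c" "c < d"
  shows "\<phi> c < \<phi> d"
proof -
  define c' where "c' = (c + d) / 2"
  have c': "0 < c'" "c' < d" "c \<le> c'" using assms unfolding c'_def by auto
  obtain \<kappa> where \<kappa>: "\<kappa> > 0" "\<forall>P\<in>QT X Qr T. EU P c' + ereal \<kappa> \<le> EU P d"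
    using EU_uniform_gap[OF c'(1,2)] by auto
  have "\<phi> c' + ereal \<kappa> \<le> \<phi> d"
    unfolding \<phi>_def[of d]
  proof (rule INF_greatest)
    fix P assume P: "P \<in> QT X Qr T"
    have "\<phi> c' + ereal \<kappa> \<le> EU P c' + ereal \<kappa>" unfolding \<phi>_def by (intro add_right_mono INF_lower P)
    also have "\<dots> \<le> EU P d" using \<kappa> P by auto
    finally show "\<phi> c' + ereal \<kappa> \<le> EU P d" .
  qed
  moreover have "\<phi> c' < \<phi> c' + ereal \<kappa>" using \<kappa>(1) \<phi>_eq_\<phi>r[OF c'(1)] by simp
  ultimately have "\<phi> c' < \<phi> d" by simp
  with \<phi>_mono[OF assms(1) c'(3)] show ?thesis by simp
qed

lemma ex1_robust_ce: "\<exists>!c. 0 \<le> c \<and> ennreal c \<le> ennreal Gmax \<and> \<phi> c = \<phi>G"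
proof (rule ex_ex1I)
  obtain r where r: "\<phi>G = ereal r" using \<phi>G_finite by (cases \<phi>G) auto
  show "\<exists>c. 0 \<le> c \<and> ennreal c \<le> ennreal Gmax \<and> \<phi> c = \<phi>G"
  proof (cases "\<phi> 0 = \<phi>G")
    case False
    then have "\<phi> 0 < \<phi>G" using \<phi>_0_le_\<phi>G by auto
    then obtain P where P: "P \<in> QT X Qr T" "EU P 0 < \<phi>G" unfolding \<phi>_def INF_less_iff by auto
    then obtain n where "EU P (1 / Suc n) < \<phi>G" unfolding EU_0_eq_INF[OF P(1)] by (auto simp: INF_less_iff)
    moreover define e where "e = 1 / real (Suc n)"
    ultimately have e: "0 < e" "\<phi> e < \<phi>G"
      using INF_lower[OF P(1), of "\<lambda>P. EU P e"] unfolding \<phi>_def by auto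
    have "e < Gmax"
      using \<phi>_mono[of Gmax e] \<phi>G_le_\<phi>_Gmax e by (cases "e < Gmax") (auto simp: Gmax_def)
    moreover have "continuous_on {e..Gmax} \<phi>r"
      by (rule continuous_on_subset[OF continuous_on_\<phi>r]) (use e in auto)
    moreover have "\<phi>r e \<le> r" "r \<le> \<phi>r Gmax"
      using e \<phi>G_le_\<phi>_Gmax \<phi>_eq_\<phi>r[OF e(1)] \<phi>_eq_\<phi>r[of Gmax] \<open>e < Gmax\<close> r by auto
    ultimately obtain c where "e \<le> c" "c \<le> Gmax" "\<phi>r c = r"
      using IVT'[of \<phi>r e r Gmax] by auto
    then show ?thesis using e r \<phi>_eq_\<phi>r[of c] by (intro exI[of _ c]) (auto intro: ennreal_leI)
  qed (auto simp: Gmax_def)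
next
  fix c d assume "0 \<le> c \<and> ennreal c \<le> ennreal Gmax \<and> \<phi> c = \<phi>G"
    "0 \<le> d \<and> ennreal d \<le> ennreal Gmax \<and> \<phi> d = \<phi>G"
  then show "c = d" using \<phi>_strict_mono[of c d] \<phi>_strict_mono[of d c] by (cases c d rule: linorder_cases) auto
qed

lemma ce: "P \<in> QT X Qr T \<Longrightarrow> 0 \<le> ce P \<and> EU P (ce P) = EUG P"
  unfolding ce_def by (rule theI'[OF ex1_ce])

lemma INF_ce_le_robust_ce:
  assumes c: "0 \<le> c" "\<phi> c = \<phi>G"
  shows "(INF P\<in>QT X Qr T. ce P) \<le> c"
proof (rule ccontr)
  define d where "d = (INF P\<in>QT X Qr T. ce P)"
  assume "\<not> d \<le> c"
  then have "\<phi> c < \<phi> d" using c by (intro \<phi>_strict_mono) auto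
  also have "\<phi> d \<le> \<phi>G"
    unfolding \<phi>G_def
  proof (rule INF_greatest)
    fix P assume P: "P \<in> QT X Qr T"
    have "d \<le> ce P" unfolding d_def using ce by (intro cINF_lower[OF _ P] bdd_belowI) auto
    then have "\<phi> d \<le> EU P (ce P)"
      using c \<open>\<not> d \<le> c\<close> INF_lower[OF P, of "\<lambda>P. EU P d"] EU_mono[OF P, of d "ce P"]
      unfolding \<phi>_def by auto
    then show "\<phi> d \<le> EUG P" using ce[OF P] by simp
  qed
  finally show False using c by simp
qed

lemma robust_certainty_equivalent:
  "(\<exists>!c::real. 0 \<le> c \<and> ennreal c \<le> qs_norm (Om X T) (QT X Qr T) G \<and>
      (INF P\<in>QT X Qr T. Eexp P (\<lambda>\<omega>. Uext (U \<omega>) c))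
        = (INF P\<in>QT X Qr T. Eexp P (\<lambda>\<omega>. Uext (U \<omega>) (enn2real (G \<omega>)))))
   \<and> (\<forall>c::real. 0 \<le> c \<and> ennreal c \<le> qs_norm (Om X T) (QT X Qr T) G \<and>
      (INF P\<in>QT X Qr T. Eexp P (\<lambda>\<omega>. Uext (U \<omega>) c))
        = (INF P\<in>QT X Qr T. Eexp P (\<lambda>\<omega>. Uext (U \<omega>) (enn2real (G \<omega>))))
      \<longrightarrow> c \<ge> (INF P\<in>QT X Qr T. (THE e::real. 0 \<le> e \<and>
             Eexp P (\<lambda>\<omega>. Uext (U \<omega>) e) = Eexp P (\<lambda>\<omega>. Uext (U \<omega>) (enn2real (G \<omega>))))))"
  using ex1_robust_ce INF_ce_le_robust_ce
  unfolding qs_norm_eq_Gmax \<phi>_def \<phi>G_def ce_def EU_def EUG_def by blast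

end

theorem proposition3p2:
  fixes X :: "nat \<Rightarrow> 'a topology"
    and T :: nat
    and Qr :: "nat \<Rightarrow> (nat \<Rightarrow> 'a) \<Rightarrow> 'a measure set"
    and G :: "(nat \<Rightarrow> 'a) \<Rightarrow> ennreal"
  assumes T: "1 \<le> T"
    and Polish: "\<forall>t\<in>{1..T}. Polish_space (X t)"
    and Qr: "\<forall>s<T. \<forall>\<omega>\<in>topspace (Om X s). Qr (Suc s) \<omega> \<subseteq> probs (X (Suc s))"
    and QT_ne: "QT X Qr T \<noteq> {}"
    and G_meas: "G \<in> borel_measurable (univ_space (Om X T))"
    and G_fin: "qs (Om X T) (QT X Qr T) (\<lambda>\<omega>. G \<omega> < \<infinity>)"
  shows
   "(\<forall>U. random_utility X T U
       \<and> (\<forall>y>0. (SUP P\<in>QT X Qr T. Epos P (\<lambda>\<omega>. ennreal (- U \<omega> y))) < \<infinity>)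
       \<and> (\<forall>P\<in>QT X Qr T. Epos P (\<lambda>\<omega>. ennreal (U \<omega> 1)) < \<infinity>)
       \<and> (\<forall>P\<in>QT X Qr T. Epos P (\<lambda>\<omega>. e2ennreal \<bar>Uext (U \<omega>) (enn2real (G \<omega>))\<bar>) < \<infinity>)
     \<longrightarrow>
       (\<forall>P\<in>QT X Qr T. \<exists>!c::real. 0 \<le> c \<and>
           Eexp P (\<lambda>\<omega>. Uext (U \<omega>) c) = Eexp P (\<lambda>\<omega>. Uext (U \<omega>) (enn2real (G \<omega>))))
     \<and> ((\<exists>M::real. qs (Om X T) (QT X Qr T) (\<lambda>\<omega>. G \<omega> \<le> ennreal M))
         \<and> (SUP P\<in>QT X Qr T. Epos P (\<lambda>\<omega>. e2ennreal (- Uext (U \<omega>) (enn2real (G \<omega>))))) < \<infinity>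
         \<and> (\<forall>z>0. (INF P\<in>QT X Qr T. Epos P (\<lambda>\<omega>. ennreal (deriv (U \<omega>) z))) > 0)
        \<longrightarrow>
         (\<exists>!c::real. 0 \<le> c \<and> ennreal c \<le> qs_norm (Om X T) (QT X Qr T) G \<and>
            (INF P\<in>QT X Qr T. Eexp P (\<lambda>\<omega>. Uext (U \<omega>) c))
              = (INF P\<in>QT X Qr T. Eexp P (\<lambda>\<omega>. Uext (U \<omega>) (enn2real (G \<omega>)))))
         \<and> (\<forall>c::real. 0 \<le> c \<and> ennreal c \<le> qs_norm (Om X T) (QT X Qr T) G \<and>
            (INF P\<in>QT X Qr T. Eexp P (\<lambda>\<omega>. Uext (U \<omega>) c))
              = (INF P\<in>QT X Qr T. Eexp P (\<lambda>\<omega>. Uext (U \<omega>) (enn2real (G \<omega>))))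
            \<longrightarrow> c \<ge> (INF P\<in>QT X Qr T. (THE e::real. 0 \<le> e \<and>
                   Eexp P (\<lambda>\<omega>. Uext (U \<omega>) e) = Eexp P (\<lambda>\<omega>. Uext (U \<omega>) (enn2real (G \<omega>))))))))
    \<and>
    (\<forall>u. utility u \<and> {x. Uext u x > -\<infinity>} = {0<..}
       \<and> (\<forall>P\<in>QT X Qr T. Epos P (\<lambda>\<omega>. e2ennreal (Uext u (enn2real (G \<omega>)))) < \<infinity>)
       \<and> (SUP P\<in>QT X Qr T. Epos P (\<lambda>\<omega>. e2ennreal (- Uext u (enn2real (G \<omega>))))) < \<infinity>
     \<longrightarrow>
       (\<forall>P\<in>QT X Qr T. \<exists>!c::real. 0 \<le> c \<and> Uext u c = Eexp P (\<lambda>\<omega>. Uext u (enn2real (G \<omega>))))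
     \<and> (\<exists>!c::real. 0 \<le> c \<and> Uext u c = (INF P\<in>QT X Qr T. Eexp P (\<lambda>\<omega>. Uext u (enn2real (G \<omega>)))))
     \<and> (let eP = (\<lambda>P. THE c::real. 0 \<le> c \<and> Uext u c = Eexp P (\<lambda>\<omega>. Uext u (enn2real (G \<omega>))));
           eG = (THE c::real. 0 \<le> c \<and>
                   Uext u c = (INF P\<in>QT X Qr T. Eexp P (\<lambda>\<omega>. Uext u (enn2real (G \<omega>)))));
           rho = (\<lambda>P. enn2ereal (Epos P G) - ereal (eP P));
           rhoG = (SUP P\<in>QT X Qr T. rho P)
       in (\<forall>P\<in>QT X Qr T. ennreal (eP P) \<le> Epos P G)
          \<and> eG = (INF P\<in>QT X Qr T. eP P)
          \<and> ennreal eG \<le> (INF P\<in>QT X Qr T. Epos P G)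
          \<and> 0 \<le> rhoG
          \<and> rhoG \<le> (SUP P\<in>QT X Qr T. enn2ereal (Epos P G)) - ereal eG))"
proof -
  interpret qs_setting X T Qr G
    using Polish QT_ne G_meas G_fin by unfold_locales
  note random = random_utility_setting.intro[OF qs_setting_axioms random_utility_setting_axioms.intro]
  note robust = robust_random_utility.intro[OF random robust_random_utility_axioms.intro]
  note deterministic = deterministic_utility.intro[OF qs_setting_axioms deterministic_utility_axioms.intro]
  show ?thesis
    apply (intro conjI allI impI; elim conjE)
         apply (rule random_utility_setting.ex1_certainty_equivalent[OF random]; blast)
        apply (rule robust_random_utility.robust_certainty_equivalent[OF robust, THEN conjunct1]; blast)
       apply (rule robust_random_utility.robust_certainty_equivalent[OF robust, THEN conjunct2,
          rule_format]; blast)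
      apply (rule deterministic_utility.certainty_equivalents[OF deterministic, THEN conjunct1]; blast)
     apply (rule deterministic_utility.certainty_equivalents[OF deterministic, THEN conjunct2,
        THEN conjunct1]; blast)
    apply (rule deterministic_utility.certainty_equivalents[OF deterministic, THEN conjunct2,
        THEN conjunct2]; blast)
    done
qed

end
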